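(* Let $V$ be a real $2\pi$-periodic function with $\Vert V\Vert_0<\infty$, let $n,l\in\mathbb{Z}$ with $2n+l\neq0$, and let $s_1<s_2$ lie in $[\frac l2-\frac14,\frac l2+\frac14]$. Define for $t$ in this interval $T_1(t):=P_n\mathbb{V}\widehat R_l(t)$ and $T_2(t):=P_n\mathbb{V}\widehat R_l(t)\mathbb{V}\widehat R_l(t)$. Then for every $\psi\in H^2(\mathbb{Z})$, $$\int_{s_1}^{s_2}U_0^\ast P_n\mathbb{V}\mathbb{P}^\perp_{n,l}U_0\Omega\psi\,dt=\int_{s_1}^{s_2}U_0^\ast\big(T_2\mathbb{V}+i\dot T_2-T_1\mathbb{V}\mathbb{P}_{n,l}-i\dot T_1\big)U_0\Omega\psi\,dt+\Big[iU_0^\ast(T_1-T_2)U_0\Omega\psi\Big]_{t=s_1}^{t=s_2},$$ where all operators are evaluated at time $t$ and a dot denotes the derivative in $t$.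
   Context: $\widehat V(m):=\frac{1}{\sqrt{2\pi}}\int_0^{2\pi}e^{-imx}V(x)\,dx$, $\Vert V\Vert_0^2:=\sum_m|\widehat V(m)|^2$, $H^2(\mathbb{Z}):=\{\psi:\sum_m(1+m^2)^2|\psi(m)|^2<\infty\}$. On $L^2(\mathbb{Z})$: $\mathbb{V}$ is the convolution operator $(\mathbb{V}\psi)(m)=\frac{1}{\sqrt{2\pi}}\sum_j\widehat V(m-j)\psi(j)$; $E_m(t):=(m+t)^2$; $H_0(t)\psi(m)=E_m(t)\psi(m)$ and $H(t)=H_0(t)+\mathbb{V}$; $U_0(t)$, $U(t)$ are the unitary propagators from $0$ to $t$ generated by $H_0(t)$, $H(t)$ ($i\partial_tU(t)=H(t)U(t)$, $U(0)=I$), and $\Omega(t):=U_0(t)^\ast U(t)$. $P_m$ is the orthogonal projection onto the site $m$, $\mathbb{P}_{n,l}:=P_n+P_{-n-l}$, $\mathbb{P}^\perp_{n,l}:=I-\mathbb{P}_{n,l}$, and $\widehat R_l(t):=(H_0(t)-E_n(t))^{-1}\mathbb{P}^\perp_{n,l}$ is the reduced resolvent (i.e. multiplication by $(E_m(t)-E_n(t))^{-1}$ for $m\notin\{n,-n-l\}$ and by $0$ for $m\in\{n,-n-l\}$). *)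

theory Defs
  imports "HOL-Analysis.Analysis"
begin

type_synonym state = "int \<Rightarrow> complex"

definition ell2 :: "state \<Rightarrow> bool" where
  "ell2 \<phi> \<longleftrightarrow> (\<lambda>k. (cmod (\<phi> k))^2) summable_on UNIV"

definition l2norm :: "state \<Rightarrow> real" where
  "l2norm \<phi> = sqrt (\<Sum>\<^sub>\<infinity>k. (cmod (\<phi> k))^2)"

definition H2 :: "state \<Rightarrow> bool" where
  "H2 \<psi> \<longleftrightarrow> (\<lambda>k. (1 + (real_of_int k)^2)^2 * (cmod (\<psi> k))^2) summable_on UNIV"

definition Vhat :: "(real \<Rightarrow> real) \<Rightarrow> int \<Rightarrow> complex" where
  "Vhat V m = complex_of_real (1 / sqrt (2*pi)) *
     integral {0..2*pi} (\<lambda>x. exp (- \<i> * of_int m * of_real x) * of_real (V x))"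

definition norm0_finite :: "(real \<Rightarrow> real) \<Rightarrow> bool" where
  "norm0_finite V \<longleftrightarrow> (\<lambda>m. (cmod (Vhat V m))^2) summable_on UNIV"

definition Vop :: "(real \<Rightarrow> real) \<Rightarrow> state \<Rightarrow> state" where
  "Vop V \<psi> m = complex_of_real (1 / sqrt (2*pi)) * (\<Sum>\<^sub>\<infinity>j. Vhat V (m - j) * \<psi> j)"

definition E :: "int \<Rightarrow> real \<Rightarrow> real" where
  "E m t = (real_of_int m + t)^2"

definition H0 :: "real \<Rightarrow> state \<Rightarrow> state" where
  "H0 t \<psi> m = complex_of_real (E m t) * \<psi> m"

definition Hop :: "(real \<Rightarrow> real) \<Rightarrow> real \<Rightarrow> state \<Rightarrow> state" where
  "Hop V t \<psi> m = H0 t \<psi> m + Vop V \<psi> m"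

text \<open>Free propagator: H0(t) is diagonal, so U0(t) is multiplication by
  exp(-i \<integral>_0^t E_m(s) ds) = exp(-i((m+t)^3 - m^3)/3); U0adj is its adjoint.\<close>

definition phase0 :: "int \<Rightarrow> real \<Rightarrow> real" where
  "phase0 m t = ((real_of_int m + t)^3 - (real_of_int m)^3) / 3"

definition U0 :: "real \<Rightarrow> state \<Rightarrow> state" where
  "U0 t \<psi> m = exp (- \<i> * complex_of_real (phase0 m t)) * \<psi> m"

definition U0adj :: "real \<Rightarrow> state \<Rightarrow> state" where
  "U0adj t \<psi> m = exp (\<i> * complex_of_real (phase0 m t)) * \<psi> m"

definition l2_has_deriv :: "(real \<Rightarrow> state) \<Rightarrow> state \<Rightarrow> real \<Rightarrow> bool" where
  "l2_has_deriv f D t \<longleftrightarrow>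
     ((\<lambda>s. l2norm (\<lambda>k. (f s k - f t k) / complex_of_real (s - t) - D k)) \<longlongrightarrow> 0) (at t)"

text \<open>U is the unitary propagator from 0 to t generated by H(t) = H0(t) + V:
  each U(t) is a linear, norm-preserving, surjective map of L2(Z) (unitary),
  U(0) = I, U(t) preserves H2(Z), and i d/dt U(t)\<psi> = H(t) U(t)\<psi> (strongly) for \<psi> in H2.\<close>

definition is_propagator :: "(real \<Rightarrow> real) \<Rightarrow> (real \<Rightarrow> state \<Rightarrow> state) \<Rightarrow> bool" where
  "is_propagator V U \<longleftrightarrow>
     (\<forall>t \<phi>. ell2 \<phi> \<longrightarrow> ell2 (U t \<phi>) \<and> l2norm (U t \<phi>) = l2norm \<phi>) \<and>
     (\<forall>t \<phi> w (a::complex). ell2 \<phi> \<longrightarrow> ell2 w \<longrightarrow>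
        U t (\<lambda>k. a * \<phi> k + w k) = (\<lambda>k. a * U t \<phi> k + U t w k)) \<and>
     (\<forall>t w. ell2 w \<longrightarrow> (\<exists>\<phi>. ell2 \<phi> \<and> U t \<phi> = w)) \<and>
     (\<forall>\<phi>. ell2 \<phi> \<longrightarrow> U 0 \<phi> = \<phi>) \<and>
     (\<forall>t \<phi>. H2 \<phi> \<longrightarrow> H2 (U t \<phi>) \<and>
        l2_has_deriv (\<lambda>s. U s \<phi>) (\<lambda>k. - \<i> * Hop V t (U t \<phi>) k) t)"

definition Omega :: "(real \<Rightarrow> state \<Rightarrow> state) \<Rightarrow> real \<Rightarrow> state \<Rightarrow> state" where
  "Omega U t \<psi> = U0adj t (U t \<psi>)"

definition Pm :: "int \<Rightarrow> state \<Rightarrow> state" where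
  "Pm n \<psi> k = (if k = n then \<psi> k else 0)"

definition PP :: "int \<Rightarrow> int \<Rightarrow> state \<Rightarrow> state" where
  "PP n l \<psi> k = (if k = n \<or> k = - n - l then \<psi> k else 0)"

definition PPperp :: "int \<Rightarrow> int \<Rightarrow> state \<Rightarrow> state" where
  "PPperp n l \<psi> k = (if k = n \<or> k = - n - l then 0 else \<psi> k)"

definition Rhat :: "int \<Rightarrow> int \<Rightarrow> real \<Rightarrow> state \<Rightarrow> state" where
  "Rhat n l t \<psi> k = (if k = n \<or> k = - n - l then 0
                      else \<psi> k / complex_of_real (E k t - E n t))"

definition T1 :: "(real \<Rightarrow> real) \<Rightarrow> int \<Rightarrow> int \<Rightarrow> real \<Rightarrow> state \<Rightarrow> state" where
  "T1 V n l t \<phi> = Pm n (Vop V (Rhat n l t \<phi>))"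

definition T2 :: "(real \<Rightarrow> real) \<Rightarrow> int \<Rightarrow> int \<Rightarrow> real \<Rightarrow> state \<Rightarrow> state" where
  "T2 V n l t \<phi> = Pm n (Vop V (Rhat n l t (Vop V (Rhat n l t \<phi>))))"

definition dT :: "(real \<Rightarrow> state \<Rightarrow> state) \<Rightarrow> real \<Rightarrow> state \<Rightarrow> state" where
  "dT T t \<phi> k = vector_derivative (\<lambda>s. T s \<phi> k) (at t)"

definition lhs_integrand :: "(real \<Rightarrow> real) \<Rightarrow> (real \<Rightarrow> state \<Rightarrow> state) \<Rightarrow> int \<Rightarrow> int \<Rightarrow> state \<Rightarrow> real \<Rightarrow> state" where
  "lhs_integrand V U n l \<psi> t =
     U0adj t (Pm n (Vop V (PPperp n l (U0 t (Omega U t \<psi>)))))"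

definition rhs_integrand :: "(real \<Rightarrow> real) \<Rightarrow> (real \<Rightarrow> state \<Rightarrow> state) \<Rightarrow> int \<Rightarrow> int \<Rightarrow> state \<Rightarrow> real \<Rightarrow> state" where
  "rhs_integrand V U n l \<psi> t =
     (let \<phi> = U0 t (Omega U t \<psi>) in
      U0adj t (\<lambda>k. T2 V n l t (Vop V \<phi>) k + \<i> * dT (T2 V n l) t \<phi> k
                   - T1 V n l t (Vop V (PP n l \<phi>)) k - \<i> * dT (T1 V n l) t \<phi> k))"

definition bdry :: "(real \<Rightarrow> real) \<Rightarrow> (real \<Rightarrow> state \<Rightarrow> state) \<Rightarrow> int \<Rightarrow> int \<Rightarrow> state \<Rightarrow> real \<Rightarrow> state" where
  "bdry V U n l \<psi> t =
     (let \<phi> = U0 t (Omega U t \<psi>) in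
      (\<lambda>k. \<i> * U0adj t (\<lambda>j. T1 V n l t \<phi> j - T2 V n l t \<phi> j) k))"

end

theory Submission
  imports Defs
begin

(* With phi(t) = U(t) psi, the boundary term is G(t) = i e^(i theta_n(t)) ((T1 - T2)(t) phi(t))_n,
   and the identity is the fundamental theorem of calculus for G.  Differentiating with
   i phi' = (H0 + V) phi and (e^(i theta_n))' = i E_n e^(i theta_n), the H0-terms appear only as
   T_k (H0 - E_n); since Rhat (H0 - E_n) = P_perp, this is P_n V P_perp for T1 and T1 V P_perp for
   T2, and what is left is the difference of the two integrands.
   Analytically, (T_k(t) x)_n is the pairing of x with a kernel in l2.  For |t - l/2| < 3/8 the
   multipliers 1 / (E_j(t) - E_n(t)) are O(1 / (1 + |j - n|)) uniformly in t, so the kernels are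
   differentiable in l2 and the product rule applies along the strongly differentiable phi. *)

section \<open>Unordered sums\<close>

lemma has_sum_diff:
  fixes f g :: "'a \<Rightarrow> complex"
  assumes "(f has_sum a) A" "(g has_sum b) A"
  shows "((\<lambda>x. f x - g x) has_sum (a - b)) A"
proof -
  have "((\<lambda>x. - g x) has_sum - b) A" using assms(2) by (simp add: has_sum_uminus)
  from has_sum_add[OF assms(1) this] show ?thesis by simp
qed

lemma has_sum_sum:
  fixes f :: "'i \<Rightarrow> 'a \<Rightarrow> 'b::topological_comm_monoid_add"
  shows "finite F \<Longrightarrow> (\<And>m. m \<in> F \<Longrightarrow> (f m has_sum s m) A) \<Longrightarrow>
     ((\<lambda>j. \<Sum>m\<in>F. f m j) has_sum (\<Sum>m\<in>F. s m)) A"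
  by (induction F rule: finite_induct) (auto intro!: has_sum_add)

lemma infsum_lincomb:
  fixes f g :: "'a \<Rightarrow> complex"
  assumes "f summable_on A" "g summable_on A"
  shows "(\<Sum>\<^sub>\<infinity>x\<in>A. c * f x + d * g x) = c * infsum f A + d * infsum g A"
  using assms by (simp add: infsum_add summable_on_cmult_right infsum_cmult_right')

lemma infsum_mult_remainder:
  fixes a b c v :: "'a \<Rightarrow> complex"
  assumes "(\<lambda>k. a k * v k) summable_on A" "(\<lambda>k. b k * v k) summable_on A" "(\<lambda>k. c k * v k) summable_on A"
  shows "(\<Sum>\<^sub>\<infinity>k\<in>A. (a k - b k - h * c k) * v k)
      = (\<Sum>\<^sub>\<infinity>k\<in>A. a k * v k) - (\<Sum>\<^sub>\<infinity>k\<in>A. b k * v k) - h * (\<Sum>\<^sub>\<infinity>k\<in>A. c k * v k)"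
proof (rule infsumI)
  have "(\<lambda>k. (a k - b k - h * c k) * v k) = (\<lambda>k. a k * v k - b k * v k - h * (c k * v k))"
    by (simp add: fun_eq_iff left_diff_distrib mult.assoc)
  moreover have "((\<lambda>k. a k * v k - b k * v k - h * (c k * v k)) has_sum
      (\<Sum>\<^sub>\<infinity>k\<in>A. a k * v k) - (\<Sum>\<^sub>\<infinity>k\<in>A. b k * v k) - h * (\<Sum>\<^sub>\<infinity>k\<in>A. c k * v k)) A"
    using assms by (intro has_sum_diff has_sum_cmult_right has_sum_infsum)
  ultimately show "((\<lambda>k. (a k - b k - h * c k) * v k) has_sum
      (\<Sum>\<^sub>\<infinity>k\<in>A. a k * v k) - (\<Sum>\<^sub>\<infinity>k\<in>A. b k * v k) - h * (\<Sum>\<^sub>\<infinity>k\<in>A. c k * v k)) A"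
    by simp
qed

lemma infsum_swap_dominated:
  fixes f :: "'a \<Rightarrow> 'b \<Rightarrow> complex"
  assumes a: "(\<lambda>k. cmod (a k)) summable_on UNIV" and y: "(\<lambda>j. cmod (y j)) summable_on UNIV"
    and f: "\<And>k j. cmod (f k j) \<le> C * cmod (a k) * cmod (y j)"
  shows "(\<Sum>\<^sub>\<infinity>k. \<Sum>\<^sub>\<infinity>j. f k j) = (\<Sum>\<^sub>\<infinity>j. \<Sum>\<^sub>\<infinity>k. f k j)"
proof (rule infsum_swap_banach)
  define Y where "Y = (\<Sum>\<^sub>\<infinity>j. cmod (y j))"
  have ry: "(\<lambda>j. (C * cmod (a k)) * cmod (y j)) summable_on UNIV" for k
    using y by (rule summable_on_cmult_right)
  have rows: "(\<lambda>j. norm (f k j)) summable_on UNIV" for k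
    by (rule summable_on_comparison_test[OF ry[of k]]) (simp_all add: f)
  have "(\<Sum>\<^sub>\<infinity>j. norm (f k j)) \<le> (\<Sum>\<^sub>\<infinity>j. (C * cmod (a k)) * cmod (y j))" for k
    by (rule infsum_mono[OF rows ry[of k]]) (simp add: f)
  then have row_bound: "(\<Sum>\<^sub>\<infinity>j. norm (f k j)) \<le> (C * Y) * cmod (a k)" for k
    unfolding Y_def infsum_cmult_right' by (simp add: mult_ac)
  have "(\<lambda>k. (C * Y) * cmod (a k)) summable_on UNIV"
    using a by (rule summable_on_cmult_right)
  then have "(\<lambda>k. norm (\<Sum>\<^sub>\<infinity>j. norm (f k j))) summable_on UNIV"
    by (rule summable_on_comparison_test) (simp_all add: row_bound infsum_nonneg)
  with rows have "(\<lambda>x. norm ((\<lambda>(k, j). f k j) x)) summable_on UNIV \<times> UNIV"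
    using Infinite_Sum.abs_summable_on_Sigma_iff[where f="\<lambda>(k, j). f k j" and A=UNIV and B="\<lambda>_. UNIV"] by simp
  then show "(\<lambda>(k, j). f k j) summable_on UNIV \<times> UNIV"
    by (rule abs_summable_summable)
qed

section \<open>Square-summable sequences\<close>

lemma l2norm_nonneg: "0 \<le> l2norm x"
  unfolding l2norm_def by (simp add: infsum_nonneg)

lemma l2norm_square: "(l2norm v)^2 = (\<Sum>\<^sub>\<infinity>k. (cmod (v k))^2)"
  unfolding l2norm_def by (simp add: infsum_nonneg)

lemma ell2_dominated:
  assumes "ell2 x" and "\<And>k. cmod (y k) \<le> C * cmod (x k)"
  shows "ell2 y" and "l2norm y \<le> \<bar>C\<bar> * l2norm x"
proof -
  have le: "(cmod (y k))^2 \<le> C^2 * (cmod (x k))^2" for k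
    using power_mono[OF assms(2)[of k] norm_ge_zero] by (simp add: power_mult_distrib)
  have s: "(\<lambda>k. C^2 * (cmod (x k))^2) summable_on UNIV"
    using assms(1) unfolding ell2_def by (rule summable_on_cmult_right)
  show "ell2 y" unfolding ell2_def
    by (rule summable_on_comparison_test[OF s]) (use le in auto)
  then have "(\<Sum>\<^sub>\<infinity>k. (cmod (y k))^2) \<le> C^2 * (\<Sum>\<^sub>\<infinity>k. (cmod (x k))^2)"
    using s le unfolding ell2_def infsum_cmult_right'[symmetric] by (intro infsum_mono) auto
  then have "sqrt (\<Sum>\<^sub>\<infinity>k. (cmod (y k))^2) \<le> sqrt (C^2 * (\<Sum>\<^sub>\<infinity>k. (cmod (x k))^2))"
    by (rule real_sqrt_le_mono)
  then show "l2norm y \<le> \<bar>C\<bar> * l2norm x" unfolding l2norm_def by (simp add: real_sqrt_mult)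
qed

lemma ell2_add:
  assumes "ell2 x" "ell2 y" shows "ell2 (\<lambda>k. x k + y k)"
proof -
  have s: "(\<lambda>k. 2 * (cmod (x k))^2 + 2 * (cmod (y k))^2) summable_on UNIV"
    using assms unfolding ell2_def by (intro summable_on_add summable_on_cmult_right)
  have "(cmod (x k + y k))^2 \<le> 2 * (cmod (x k))^2 + 2 * (cmod (y k))^2" for k
  proof -
    have "(cmod (x k + y k))^2 \<le> (cmod (x k) + cmod (y k))^2"
      by (simp add: norm_triangle_ineq power_mono)
    also have "\<dots> \<le> 2 * (cmod (x k))^2 + 2 * (cmod (y k))^2"
      using zero_le_power2[of "cmod (x k) - cmod (y k)"] by (simp add: power2_eq_square algebra_simps)
    finally show ?thesis .
  qed
  then show ?thesis unfolding ell2_def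
    by (intro summable_on_comparison_test[OF s]) auto
qed

lemma ell2_scale: "ell2 x \<Longrightarrow> ell2 (\<lambda>k. a * x k)"
  by (rule ell2_dominated(1)[of _ _ "cmod a"]) (auto simp: norm_mult)

lemma ell2_diff: "ell2 x \<Longrightarrow> ell2 y \<Longrightarrow> ell2 (\<lambda>k. x k - y k)"
  using ell2_add[of x "\<lambda>k. (-1) * y k"] ell2_scale[of y "-1"] by simp

lemma ell2_zero: "ell2 (\<lambda>k. 0)"
  by (simp add: ell2_def)

lemma norm_le_l2norm:
  assumes "ell2 v" shows "cmod (v k) \<le> l2norm v"
proof -
  have "(\<Sum>j\<in>{k}. (cmod (v j))^2) \<le> (\<Sum>\<^sub>\<infinity>j. (cmod (v j))^2)"
    using assms unfolding ell2_def by (rule finite_sum_le_infsum) simp_all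
  then show ?thesis
    unfolding l2norm_def by (simp add: real_le_rsqrt)
qed

lemma ell2_mult_abs_summable:
  assumes "ell2 a" "ell2 x" shows "(\<lambda>k. cmod (a k * x k)) summable_on UNIV"
  using abs_summable_product[of a UNIV x] assms
  by (simp add: ell2_def norm_mult power2_eq_square)

lemma ell2_mult_summable: "ell2 a \<Longrightarrow> ell2 x \<Longrightarrow> (\<lambda>k. a k * x k) summable_on UNIV"
  by (rule abs_summable_summable) (use ell2_mult_abs_summable in simp)

lemma L2_set_le_l2norm:
  assumes "ell2 a" "finite F" shows "L2_set (\<lambda>k. cmod (a k)) F \<le> l2norm a"
  unfolding L2_set_def l2norm_def
  using assms by (intro real_sqrt_le_mono finite_sum_le_infsum) (auto simp: ell2_def)

lemma cauchy_schwarz_ell2: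
  assumes "ell2 a" "ell2 x"
  shows "(\<Sum>\<^sub>\<infinity>k. cmod (a k * x k)) \<le> l2norm a * l2norm x"
proof (rule infsum_le_finite_sums[OF ell2_mult_abs_summable[OF assms]])
  fix F :: "int set" assume "finite F"
  have "(\<Sum>k\<in>F. cmod (a k * x k)) \<le> L2_set (\<lambda>k. cmod (a k)) F * L2_set (\<lambda>k. cmod (x k)) F"
    using L2_set_mult_ineq[where f="\<lambda>k. cmod (a k)" and g="\<lambda>k. cmod (x k)" and A=F] by (simp add: norm_mult)
  also have "\<dots> \<le> l2norm a * l2norm x"
    using assms \<open>finite F\<close> by (intro mult_mono L2_set_le_l2norm l2norm_nonneg L2_set_nonneg)
  finally show "(\<Sum>k\<in>F. cmod (a k * x k)) \<le> l2norm a * l2norm x" .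
qed

lemma norm_infsum_mult_le:
  assumes "ell2 a" "ell2 x"
  shows "cmod (\<Sum>\<^sub>\<infinity>k. a k * x k) \<le> l2norm a * l2norm x"
  using norm_infsum_bound[of "\<lambda>k. a k * x k" UNIV] ell2_mult_abs_summable[OF assms]
    cauchy_schwarz_ell2[OF assms] by simp

lemma infsum_mult_lincomb:
  assumes "ell2 a" "ell2 x" "ell2 y"
  shows "(\<Sum>\<^sub>\<infinity>k. a k * (c * x k + d * y k)) = c * (\<Sum>\<^sub>\<infinity>k. a k * x k) + d * (\<Sum>\<^sub>\<infinity>k. a k * y k)"
  using infsum_lincomb[OF ell2_mult_summable[OF assms(1,2)] ell2_mult_summable[OF assms(1,3)], of c d]
  by (simp add: algebra_simps)

lemma ell2_reindex:
  assumes "bij h"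
  shows "ell2 (\<lambda>j. v (h j)) \<longleftrightarrow> ell2 v" and "l2norm (\<lambda>j. v (h j)) = l2norm v"
  using summable_on_reindex_bij_betw[OF assms, of "\<lambda>k. (cmod (v k))^2"]
    infsum_reindex_bij_betw[OF assms, of "\<lambda>k. (cmod (v k))^2"]
  by (simp_all add: ell2_def l2norm_def)

lemma bij_int_shifts: "bij (\<lambda>j::int. a - j)" "bij (\<lambda>j::int. j - a)"
  by (rule bij_betwI[where g="\<lambda>k. a - k"]; simp) (rule bij_betwI[where g="\<lambda>k. k + a"]; simp)

definition decay :: "int \<Rightarrow> int \<Rightarrow> real" where
  "decay n j = 1 / (1 + \<bar>real_of_int (j - n)\<bar>)"

abbreviation decay_norm :: "int \<Rightarrow> real" where
  "decay_norm n \<equiv> l2norm (\<lambda>k. complex_of_real (decay n k))"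

lemma decay_pos: "0 < decay n j"
  unfolding decay_def by (simp add: add_pos_nonneg)

lemma decay_le_1: "decay n j \<le> 1"
  unfolding decay_def by simp

lemma ell2_decay: "ell2 (\<lambda>j. complex_of_real (decay n j))"
proof -
  let ?f = "\<lambda>k::int. (1 / (1 + \<bar>real_of_int k\<bar>))^2"
  have nat: "(\<lambda>k::nat. (1 / (1 + real k))^2) summable_on UNIV"
    using inverse_squares_sums
    by (subst summable_on_UNIV_nonneg_real_iff) (auto simp: sums_iff add.commute power_divide)
  have "?f summable_on range int"
    by (subst summable_on_reindex) (auto simp: o_def nat)
  moreover have "?f summable_on range (\<lambda>k. - int k)"
    by (subst summable_on_reindex) (auto simp: o_def nat inj_on_def)
  moreover have "range int \<union> range (\<lambda>k. - int k) = (UNIV :: int set)"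
  proof -
    have "k \<in> range int \<union> range (\<lambda>k. - int k)" for k :: int
      by (cases "k \<ge> 0") (auto intro!: image_eqI[where x="nat \<bar>k\<bar>"])
    then show ?thesis by auto
  qed
  ultimately have "?f summable_on UNIV" by (metis summable_on_union)
  then have "ell2 (\<lambda>k. complex_of_real (decay 0 k))"
    unfolding ell2_def decay_def norm_of_real by simp
  then show ?thesis
    using ell2_reindex(1)[OF bij_int_shifts(2)[of n], of "\<lambda>k. complex_of_real (decay 0 k)"]
    by (simp add: decay_def)
qed

lemma ell2_decay_dominated:
  assumes "\<And>k. cmod (a k) \<le> C * decay n k"
  shows "ell2 a" and "l2norm a \<le> \<bar>C\<bar> * decay_norm n"
  using ell2_dominated[OF ell2_decay, of a C n] assms decay_pos[of n]
  by (simp_all add: less_imp_le)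

section \<open>The Sobolev space H2 and convolution\<close>

lemma H2_iff_weighted_ell2: "H2 \<psi> \<longleftrightarrow> ell2 (\<lambda>k. complex_of_real (1 + (real_of_int k)^2) * \<psi> k)"
  unfolding H2_def ell2_def norm_mult norm_of_real by (simp add: power_mult_distrib)

lemma H2_ell2: "H2 \<psi> \<Longrightarrow> ell2 \<psi>"
  unfolding H2_iff_weighted_ell2
  by (erule ell2_dominated(1)[where C=1]) (simp only: norm_mult norm_of_real, simp add: mult_le_cancel_right1)

lemma H2_abs_summable:
  assumes "H2 \<psi>" shows "(\<lambda>k. cmod (\<psi> k)) summable_on UNIV"
proof -
  have "\<bar>real_of_int k\<bar> \<le> (real_of_int k)^2" for k
  proof (cases "k = 0")
    case False
    then have "1 \<le> \<bar>real_of_int k\<bar>" by linarith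
    then show ?thesis
      using mult_left_mono[of 1 "\<bar>real_of_int k\<bar>" "\<bar>real_of_int k\<bar>"] by (simp add: power2_eq_square)
  qed simp
  then have "ell2 (\<lambda>k. complex_of_real (1 + \<bar>real_of_int k\<bar>) * \<psi> k)"
    using assms unfolding H2_iff_weighted_ell2
    by (elim ell2_dominated(1)[where C=1]) (simp only: norm_mult norm_of_real, simp add: mult_right_mono)
  from ell2_mult_abs_summable[OF ell2_decay[of 0] this] show ?thesis
    unfolding norm_mult norm_of_real decay_def by (simp add: add_pos_nonneg)
qed

lemma H2_H0_ell2:
  assumes "H2 \<psi>" shows "ell2 (H0 t \<psi>)"
proof -
  have "E k t \<le> (2 + 2 * t^2) * (1 + (real_of_int k)^2)" for k
    using zero_le_power2[of "real_of_int k - t"] zero_le_power2[of "t * real_of_int k"]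
    unfolding E_def by (simp add: power2_eq_square algebra_simps)
  then show ?thesis
    using assms unfolding H2_iff_weighted_ell2 H0_def
    by (elim ell2_dominated(1)[where C="2 + 2 * t^2"])
      (simp only: norm_mult norm_of_real, simp add: E_def, metis mult.assoc mult_right_mono norm_ge_zero)
qed

lemma conv_row_summable:
  assumes v: "ell2 v" and x: "(\<lambda>j. cmod (x j)) summable_on UNIV"
  shows "(\<lambda>j. (cmod (v (m - j)))^2 * cmod (x j)) summable_on UNIV"
proof (rule summable_on_comparison_test[OF summable_on_cmult_right[OF x, of "(l2norm v)^2"]])
  show "(cmod (v (m - j)))^2 * cmod (x j) \<le> (l2norm v)^2 * cmod (x j)" for j
    by (intro mult_right_mono power_mono norm_le_l2norm v) simp_all
qed simp

text \<open>Weighted Cauchy-Schwarz: write \<open>v (m - j) x j\<close> as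
  \<open>(\<bar>v (m - j)\<bar> \<surd>\<bar>x j\<bar>) \<cdot> \<surd>\<bar>x j\<bar>\<close>.\<close>

lemma norm_conv_square_le:
  assumes v: "ell2 v" and x: "(\<lambda>j. cmod (x j)) summable_on UNIV"
  shows "(cmod (\<Sum>\<^sub>\<infinity>j. v (m - j) * x j))^2
    \<le> (\<Sum>\<^sub>\<infinity>j. cmod (x j)) * (\<Sum>\<^sub>\<infinity>j. (cmod (v (m - j)))^2 * cmod (x j))"
proof -
  define a where "a j = complex_of_real (cmod (v (m - j)) * sqrt (cmod (x j)))" for j
  define b where "b j = complex_of_real (sqrt (cmod (x j)))" for j
  have a2: "(cmod (a j))^2 = (cmod (v (m - j)))^2 * cmod (x j)"
    and b2: "(cmod (b j))^2 = cmod (x j)" for j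
    unfolding a_def b_def norm_of_real by (simp_all add: power_mult_distrib)
  have a: "ell2 a" and b: "ell2 b"
    unfolding ell2_def a2 b2 by (simp_all add: conv_row_summable[OF v x] x)
  have ab: "cmod (a j * b j) = cmod (v (m - j) * x j)" for j
    unfolding a_def b_def norm_mult norm_of_real
    by (simp add: abs_mult mult.assoc flip: real_sqrt_mult)
  have "cmod (\<Sum>\<^sub>\<infinity>j. v (m - j) * x j) \<le> (\<Sum>\<^sub>\<infinity>j. cmod (a j * b j))"
    unfolding ab by (rule norm_infsum_bound) (use ell2_mult_abs_summable[OF a b] in \<open>simp add: ab\<close>)
  also have "\<dots> \<le> l2norm a * l2norm b"
    by (rule cauchy_schwarz_ell2[OF a b])
  finally have "(cmod (\<Sum>\<^sub>\<infinity>j. v (m - j) * x j))^2 \<le> (l2norm a * l2norm b)^2"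
    by (rule power_mono) simp
  then show ?thesis
    by (simp add: power_mult_distrib l2norm_square a2 b2 mult.commute)
qed

lemma conv_weights_summable:
  assumes v: "ell2 v" and x: "(\<lambda>j. cmod (x j)) summable_on UNIV"
  shows "(\<lambda>m. \<Sum>\<^sub>\<infinity>j. (cmod (v (m - j)))^2 * cmod (x j)) summable_on UNIV"
proof (rule nonneg_bdd_above_summable_on)
  show "bdd_above (sum (\<lambda>m. \<Sum>\<^sub>\<infinity>j. (cmod (v (m - j)))^2 * cmod (x j)) ` {F. F \<subseteq> UNIV \<and> finite F})"
  proof (rule bdd_aboveI2)
    fix F :: "int set" assume "F \<in> {F. F \<subseteq> UNIV \<and> finite F}"
    then have F: "finite F" by simp
    have "((\<lambda>j. \<Sum>m\<in>F. (cmod (v (m - j)))^2 * cmod (x j))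
        has_sum (\<Sum>m\<in>F. \<Sum>\<^sub>\<infinity>j. (cmod (v (m - j)))^2 * cmod (x j))) UNIV"
      using F conv_row_summable[OF v x] by (intro has_sum_sum) auto
    moreover have "((\<lambda>j. (l2norm v)^2 * cmod (x j)) has_sum (l2norm v)^2 * (\<Sum>\<^sub>\<infinity>j. cmod (x j))) UNIV"
      using x by (intro has_sum_cmult_right) (simp add: has_sum_infsum)
    moreover have "(\<Sum>m\<in>F. (cmod (v (m - j)))^2 * cmod (x j)) \<le> (l2norm v)^2 * cmod (x j)" for j
    proof -
      have inj: "inj_on (\<lambda>m. m - j) F" by (auto simp: inj_on_def)
      have "(\<Sum>m\<in>F. (cmod (v (m - j)))^2) = (\<Sum>k\<in>(\<lambda>m. m - j) ` F. (cmod (v k))^2)"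
        by (simp add: sum.reindex[OF inj])
      also have "\<dots> \<le> (l2norm v)^2"
        unfolding l2norm_square using v F unfolding ell2_def
        by (intro finite_sum_le_infsum) simp_all
      finally show ?thesis
        by (simp add: mult_right_mono flip: sum_distrib_right)
    qed
    ultimately show "(\<Sum>m\<in>F. \<Sum>\<^sub>\<infinity>j. (cmod (v (m - j)))^2 * cmod (x j))
        \<le> (l2norm v)^2 * (\<Sum>\<^sub>\<infinity>j. cmod (x j))"
      by (rule has_sum_mono)
  qed
qed (simp add: infsum_nonneg)

lemma conv_ell2:
  assumes v: "ell2 v" and x: "(\<lambda>j. cmod (x j)) summable_on UNIV"
  shows "ell2 (\<lambda>m. \<Sum>\<^sub>\<infinity>j. v (m - j) * x j)"
  unfolding ell2_def
  using summable_on_cmult_right[OF conv_weights_summable[OF v x], of "\<Sum>\<^sub>\<infinity>j. cmod (x j)"]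
  by (rule summable_on_comparison_test) (simp_all add: norm_conv_square_le[OF v x])

section \<open>Strong derivatives\<close>

lemma tendsto_abs_diff_at: "((\<lambda>s. \<bar>s - t\<bar>) \<longlongrightarrow> 0) (at (t::real))"
proof -
  have "((\<lambda>s. \<bar>s - t\<bar>) \<longlongrightarrow> \<bar>t - t\<bar>) (at t)"
    by (rule tendsto_rabs[OF tendsto_diff[OF tendsto_ident_at tendsto_const]])
  then show ?thesis by simp
qed

lemma l2_has_deriv_const: "l2_has_deriv (\<lambda>s. x) (\<lambda>k. 0) t"
  unfolding l2_has_deriv_def l2norm_def by simp

lemma l2_has_deriv_quadratic_remainder:
  assumes "\<forall>\<^sub>F s in at t. \<forall>j. cmod (a s j - a t j - complex_of_real (s - t) * a' j) \<le> K * decay n j * (s - t)^2"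
  shows "l2_has_deriv a a' t"
  unfolding l2_has_deriv_def
proof (rule Lim_null_comparison)
  let ?W = "decay_norm n"
  show "\<forall>\<^sub>F s in at t. norm (l2norm (\<lambda>k. (a s k - a t k) / complex_of_real (s - t) - a' k))
          \<le> \<bar>K\<bar> * ?W * \<bar>s - t\<bar>"
    using assms eventually_neq_at_within[of t t UNIV]
  proof eventually_elim
    case (elim s)
    have "cmod ((a s k - a t k) / complex_of_real (s - t) - a' k) \<le> (K * \<bar>s - t\<bar>) * decay n k" for k
    proof -
      have "(a s k - a t k) / complex_of_real (s - t) - a' k
          = (a s k - a t k - complex_of_real (s - t) * a' k) / complex_of_real (s - t)"
        using elim(2) by (simp add: diff_divide_distrib)
      then have "cmod ((a s k - a t k) / complex_of_real (s - t) - a' k)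
          = cmod (a s k - a t k - complex_of_real (s - t) * a' k) / \<bar>s - t\<bar>"
        by (simp only: norm_divide norm_of_real)
      also have "\<dots> \<le> K * decay n k * (s - t)^2 / \<bar>s - t\<bar>"
        using elim(1) by (simp add: divide_right_mono)
      also have "\<dots> = (K * \<bar>s - t\<bar>) * decay n k"
      proof -
        have "(s - t)^2 = \<bar>s - t\<bar> * \<bar>s - t\<bar>" by (simp add: power2_eq_square)
        then show ?thesis using elim(2) by (simp add: field_simps del: abs_mult_self_eq)
      qed
      finally show ?thesis .
    qed
    from ell2_decay_dominated(2)[OF this] show ?case
      by (simp add: l2norm_nonneg abs_mult mult_ac)
  qed
  show "((\<lambda>s. \<bar>K\<bar> * ?W * \<bar>s - t\<bar>) \<longlongrightarrow> 0) (at t)"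
    by (rule tendsto_mult_right_zero[OF tendsto_abs_diff_at])
qed

lemma has_vector_derivative_quotient_bound:
  fixes F :: "real \<Rightarrow> complex"
  assumes "\<forall>\<^sub>F s in at t. cmod ((F s - F t) / complex_of_real (s - t) - F') \<le> g s"
    and "(g \<longlongrightarrow> 0) (at t)"
  shows "(F has_vector_derivative F') (at t)"
  unfolding has_vector_derivative_def has_derivative_iff_norm
proof (intro conjI bounded_linear_scaleR_left Lim_null_comparison[OF _ assms(2)])
  show "\<forall>\<^sub>F s in at t. norm (norm (F s - F t - (s - t) *\<^sub>R F') / norm (s - t)) \<le> g s"
    using assms(1) eventually_neq_at_within[of t t UNIV]
  proof eventually_elim
    case (elim s)
    have "X - h * F' = h * (X / h - F')" if "h \<noteq> 0" for h X :: complex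
      using that by (simp add: field_simps)
    then have "F s - F t - (s - t) *\<^sub>R F' = complex_of_real (s - t) * ((F s - F t) / complex_of_real (s - t) - F')"
      using elim(2) by (simp only: scaleR_conv_of_real) simp
    then have "norm (F s - F t - (s - t) *\<^sub>R F') = \<bar>s - t\<bar> * cmod ((F s - F t) / complex_of_real (s - t) - F')"
      by (simp only: norm_mult norm_of_real)
    then show ?case
      using elim by simp
  qed
qed

lemma difference_quotient_product:
  fixes h :: "'a::field"
  assumes "h \<noteq> 0"
  shows "inverse h * ((x + h * (q + x')) * (y + h * (r + y'))) - inverse h * (x * y) - x' * y - x * y'
      = q * (y + h * (r + y')) + h * (x' * r) + h * (x' * y') + x * r"
  using assms by (simp add: field_simps)

lemma pairing_difference_quotient_bound:
  fixes h :: complex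
  assumes h: "h \<noteq> 0" and x: "ell2 x1" "ell2 x0" "ell2 x'" and y: "ell2 y1" "ell2 y0" "ell2 y'"
  defines "qx \<equiv> \<lambda>k. (x1 k - x0 k) / h - x' k" and "qy \<equiv> \<lambda>k. (y1 k - y0 k) / h - y' k"
  shows "cmod (((\<Sum>\<^sub>\<infinity>k. x1 k * y1 k) - (\<Sum>\<^sub>\<infinity>k. x0 k * y0 k)) / h
              - ((\<Sum>\<^sub>\<infinity>k. x' k * y0 k) + (\<Sum>\<^sub>\<infinity>k. x0 k * y' k)))
    \<le> l2norm qx * l2norm y1 + cmod h * (l2norm x' * l2norm qy + l2norm x' * l2norm y')
      + l2norm x0 * l2norm qy"
proof -
  have qx: "ell2 qx" and qy: "ell2 qy"
    unfolding qx_def qy_def divide_inverse mult.commute[of _ "inverse h"]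
    using x y by (auto intro!: ell2_diff ell2_scale)
  have x1_eq: "x1 k = x0 k + h * (qx k + x' k)" and y1_eq: "y1 k = y0 k + h * (qy k + y' k)" for k
    using h unfolding qx_def qy_def by simp_all
  note sums = has_sum_infsum[OF ell2_mult_summable]
  have S1: "((\<lambda>k. inverse h * (x1 k * y1 k) - inverse h * (x0 k * y0 k) - x' k * y0 k - x0 k * y' k)
      has_sum inverse h * (\<Sum>\<^sub>\<infinity>k. x1 k * y1 k) - inverse h * (\<Sum>\<^sub>\<infinity>k. x0 k * y0 k)
        - (\<Sum>\<^sub>\<infinity>k. x' k * y0 k) - (\<Sum>\<^sub>\<infinity>k. x0 k * y' k)) UNIV"
    using x y by (intro has_sum_diff has_sum_cmult_right sums)
  have S2: "((\<lambda>k. qx k * y1 k + h * (x' k * qy k) + h * (x' k * y' k) + x0 k * qy k)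
      has_sum (\<Sum>\<^sub>\<infinity>k. qx k * y1 k) + h * (\<Sum>\<^sub>\<infinity>k. x' k * qy k)
        + h * (\<Sum>\<^sub>\<infinity>k. x' k * y' k) + (\<Sum>\<^sub>\<infinity>k. x0 k * qy k)) UNIV"
    using qx qy x y by (intro has_sum_add has_sum_cmult_right sums)
  have "(\<lambda>k. inverse h * (x1 k * y1 k) - inverse h * (x0 k * y0 k) - x' k * y0 k - x0 k * y' k)
      = (\<lambda>k. qx k * y1 k + h * (x' k * qy k) + h * (x' k * y' k) + x0 k * qy k)"
    unfolding x1_eq y1_eq by (intro ext difference_quotient_product[OF h])
  from has_sum_unique[OF S1[unfolded this] S2]
  have "((\<Sum>\<^sub>\<infinity>k. x1 k * y1 k) - (\<Sum>\<^sub>\<infinity>k. x0 k * y0 k)) / h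
          - ((\<Sum>\<^sub>\<infinity>k. x' k * y0 k) + (\<Sum>\<^sub>\<infinity>k. x0 k * y' k))
      = (\<Sum>\<^sub>\<infinity>k. qx k * y1 k) + h * ((\<Sum>\<^sub>\<infinity>k. x' k * qy k) + (\<Sum>\<^sub>\<infinity>k. x' k * y' k))
          + (\<Sum>\<^sub>\<infinity>k. x0 k * qy k)"
    by (simp add: divide_inverse algebra_simps)
  also have "cmod \<dots> \<le> cmod (\<Sum>\<^sub>\<infinity>k. qx k * y1 k)
      + cmod h * (cmod (\<Sum>\<^sub>\<infinity>k. x' k * qy k) + cmod (\<Sum>\<^sub>\<infinity>k. x' k * y' k))
      + cmod (\<Sum>\<^sub>\<infinity>k. x0 k * qy k)" (is "cmod (?A + h * (?B + ?C) + ?E) \<le> _")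
  proof -
    have "cmod (h * (?B + ?C)) \<le> cmod h * (cmod ?B + cmod ?C)"
      unfolding norm_mult by (intro mult_left_mono norm_triangle_ineq norm_ge_zero)
    then show ?thesis
      using norm_triangle_ineq[of "?A + h * (?B + ?C)" ?E] norm_triangle_ineq[of ?A "h * (?B + ?C)"]
      by linarith
  qed
  also have "\<dots> \<le> l2norm qx * l2norm y1 + cmod h * (l2norm x' * l2norm qy + l2norm x' * l2norm y')
      + l2norm x0 * l2norm qy"
    using qx qy x y
    by (intro add_mono mult_left_mono norm_infsum_mult_le norm_ge_zero)
  finally show ?thesis .
qed

text \<open>The family \<open>a\<close> must be square-summable near \<open>t\<close>: \<open>l2norm\<close> vanishes on
  non-summable sequences, so \<open>l2_has_deriv\<close> alone does not ensure this.\<close>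

lemma has_vector_derivative_pairing:
  assumes a: "l2_has_deriv a a' t" and as: "\<forall>\<^sub>F s in at t. ell2 (a s)"
    and at: "ell2 (a t)" and a': "ell2 a'"
    and \<phi>: "l2_has_deriv \<phi> D t" and \<phi>s: "\<And>s. ell2 (\<phi> s)" and B: "\<And>s. l2norm (\<phi> s) \<le> B"
    and D: "ell2 D"
  shows "((\<lambda>s. \<Sum>\<^sub>\<infinity>j. a s j * \<phi> s j) has_vector_derivative
           (\<Sum>\<^sub>\<infinity>j. a' j * \<phi> t j) + (\<Sum>\<^sub>\<infinity>j. a t j * D j)) (at t)"
proof -
  define qa where "qa s = (\<lambda>k. (a s k - a t k) / complex_of_real (s - t) - a' k)" for s
  define q\<phi> where "q\<phi> s = (\<lambda>k. (\<phi> s k - \<phi> t k) / complex_of_real (s - t) - D k)" for s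
  define g where "g s = l2norm (qa s) * B
      + \<bar>s - t\<bar> * (l2norm a' * l2norm (q\<phi> s) + l2norm a' * l2norm D)
      + l2norm (a t) * l2norm (q\<phi> s)" for s
  have Qa: "((\<lambda>s. l2norm (qa s)) \<longlongrightarrow> 0) (at t)" and Q\<phi>: "((\<lambda>s. l2norm (q\<phi> s)) \<longlongrightarrow> 0) (at t)"
    using a \<phi> unfolding l2_has_deriv_def qa_def q\<phi>_def by simp_all
  have "(g \<longlongrightarrow> 0 * B + 0 * (l2norm a' * 0 + l2norm a' * l2norm D) + l2norm (a t) * 0) (at t)"
    unfolding g_def by (intro tendsto_intros Qa Q\<phi> tendsto_abs_diff_at)
  then have g: "(g \<longlongrightarrow> 0) (at t)" by simp
  show ?thesis
  proof (rule has_vector_derivative_quotient_bound[OF _ g])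
    show "\<forall>\<^sub>F s in at t. cmod (((\<Sum>\<^sub>\<infinity>j. a s j * \<phi> s j) - (\<Sum>\<^sub>\<infinity>j. a t j * \<phi> t j))
              / complex_of_real (s - t) - ((\<Sum>\<^sub>\<infinity>j. a' j * \<phi> t j) + (\<Sum>\<^sub>\<infinity>j. a t j * D j))) \<le> g s"
      using as eventually_neq_at_within[of t t UNIV]
    proof eventually_elim
      case (elim s)
      have "cmod (((\<Sum>\<^sub>\<infinity>j. a s j * \<phi> s j) - (\<Sum>\<^sub>\<infinity>j. a t j * \<phi> t j))
              / complex_of_real (s - t) - ((\<Sum>\<^sub>\<infinity>j. a' j * \<phi> t j) + (\<Sum>\<^sub>\<infinity>j. a t j * D j)))
          \<le> l2norm (qa s) * l2norm (\<phi> s)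
            + cmod (complex_of_real (s - t)) * (l2norm a' * l2norm (q\<phi> s) + l2norm a' * l2norm D)
            + l2norm (a t) * l2norm (q\<phi> s)"
        unfolding qa_def q\<phi>_def using elim at a' \<phi>s D by (intro pairing_difference_quotient_bound) auto
      also have "\<dots> \<le> g s"
        unfolding g_def norm_of_real using mult_left_mono[OF B[of s] l2norm_nonneg[of "qa s"]] by simp
      finally show ?case .
    qed
  qed
qed

section \<open>The reduced resolvent near the crossing\<close>

text \<open>For \<open>j \<notin> {n, -n-l}\<close> the gap \<open>E j t - E n t = (j - n) (j + n + 2t)\<close> vanishes only at
  \<open>t = l/2\<close> when \<open>j = -n-l\<close>; on the open window of radius \<open>3/8\<close> around \<open>l/2\<close>, which contains
  \<open>[l/2 - 1/4, l/2 + 1/4]\<close>, the second factor stays away from \<open>0\<close> uniformly in \<open>j\<close>.\<close>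

definition window :: "int \<Rightarrow> real \<Rightarrow> bool" where
  "window l t \<longleftrightarrow> \<bar>t - real_of_int l / 2\<bar> < 3/8"

definition rres :: "int \<Rightarrow> int \<Rightarrow> real \<Rightarrow> int \<Rightarrow> real" where
  "rres n l t j = (if j = n \<or> j = - n - l then 0 else 1 / (E j t - E n t))"

definition rres_deriv :: "int \<Rightarrow> int \<Rightarrow> real \<Rightarrow> int \<Rightarrow> real" where
  "rres_deriv n l t j = - 2 * real_of_int (j - n) * (rres n l t j)^2"

lemma Rhat_eq_rres: "Rhat n l t x j = complex_of_real (rres n l t j) * x j"
  by (simp add: Rhat_def rres_def divide_inverse mult.commute)

lemma window_open: "open {t. window l t}"
proof -
  have "{t. window l t} = ball (real_of_int l / 2) (3/8)"
    by (auto simp: window_def ball_def dist_real_def abs_minus_commute)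
  then show ?thesis by simp
qed

lemma window_eventually: "window l t \<Longrightarrow> \<forall>\<^sub>F s in at t. window l s"
  using window_open[of l] by (simp add: eventually_at_topological) blast

lemma E_diff: "E j t - E n t = real_of_int (j - n) * (real_of_int (j + n) + 2 * t)"
  by (simp add: E_def power2_eq_square algebra_simps)

lemma window_gap:
  assumes "window l t" and "j \<noteq> - n - l"
  shows "1/4 \<le> \<bar>real_of_int (j + n) + 2 * t\<bar>"
proof -
  have "1 \<le> \<bar>real_of_int (j + n + l)\<bar>" using assms(2) by linarith
  moreover have "\<bar>2 * t - real_of_int l\<bar> < 3/4" using assms(1) unfolding window_def by linarith
  ultimately show ?thesis by linarith
qed

lemma E_diff_nonzero:
  assumes "window l t" and "\<not> (j = n \<or> j = - n - l)"
  shows "E j t - E n t \<noteq> 0"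
  using window_gap[OF assms(1), of j n] assms(2) by (auto simp: E_diff)

lemma rres_mult_E_diff:
  "window l t \<Longrightarrow> rres n l t j * (E j t - E n t) = (if j = n \<or> j = - n - l then 0 else 1)"
  using E_diff_nonzero[of l t j n] by (auto simp: rres_def)

lemma rres_mult_dist_bound:
  assumes "window l t"
  shows "\<bar>real_of_int (j - n) * rres n l t j\<bar> \<le> 4"
proof (cases "j = n \<or> j = - n - l")
  case False
  then have "real_of_int (j - n) * rres n l t j = 1 / (real_of_int (j + n) + 2 * t)"
    by (simp add: rres_def E_diff)
  then show ?thesis
    using window_gap[OF assms, of j n] False by (simp add: divide_le_eq mult.commute)
qed (auto simp: rres_def)

lemma rres_le_decay:
  assumes "window l t"
  shows "\<bar>rres n l t j\<bar> \<le> 8 * decay n j"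
proof (cases "j = n")
  case False
  then have d: "1 \<le> \<bar>real_of_int (j - n)\<bar>" by linarith
  then have inv: "1 / \<bar>real_of_int (j - n)\<bar> \<le> 2 * decay n j"
    unfolding decay_def by (simp add: field_simps)
  have "\<bar>rres n l t j\<bar> = \<bar>real_of_int (j - n) * rres n l t j\<bar> * (1 / \<bar>real_of_int (j - n)\<bar>)"
    using d by (simp add: abs_mult)
  also have "\<dots> \<le> 4 * (2 * decay n j)"
    by (intro mult_mono rres_mult_dist_bound[OF assms] inv) auto
  finally show ?thesis by simp
qed (use decay_pos[of n j] in \<open>simp add: rres_def\<close>)

lemma rres_diff:
  assumes "window l s" "window l t"
  shows "rres n l s j - rres n l t j = - 2 * real_of_int (j - n) * (s - t) * rres n l s j * rres n l t j"
proof (cases "j = n \<or> j = - n - l")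
  case False
  have "rres n l s j - rres n l t j = ((E j t - E n t) - (E j s - E n s)) / ((E j s - E n s) * (E j t - E n t))"
    using False E_diff_nonzero[OF assms(1) False] E_diff_nonzero[OF assms(2) False]
    by (simp add: rres_def field_simps)
  also have "(E j t - E n t) - (E j s - E n s) = - 2 * real_of_int (j - n) * (s - t)"
    by (simp add: E_diff algebra_simps)
  finally show ?thesis using False by (simp add: rres_def)
qed (simp add: rres_def)

lemma rres_remainder:
  assumes "window l s" "window l t"
  shows "rres n l s j - rres n l t j - (s - t) * rres_deriv n l t j
       = 4 * (real_of_int (j - n) * rres n l t j)^2 * (s - t)^2 * rres n l s j"
proof -
  let ?d = "real_of_int (j - n)"
  have "rres n l s j - rres n l t j - (s - t) * rres_deriv n l t j
      = (rres n l s j - rres n l t j) + 2 * ?d * (s - t) * (rres n l t j)^2"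
    by (simp add: rres_deriv_def algebra_simps)
  also have "\<dots> = - 2 * ?d * (s - t) * rres n l s j * rres n l t j + 2 * ?d * (s - t) * (rres n l t j)^2"
    by (simp only: rres_diff[OF assms])
  also have "\<dots> = - 2 * ?d * (s - t) * rres n l t j * (rres n l s j - rres n l t j)"
    by (simp add: algebra_simps power2_eq_square)
  also have "\<dots> = - 2 * ?d * (s - t) * rres n l t j * (- 2 * ?d * (s - t) * rres n l s j * rres n l t j)"
    by (simp only: rres_diff[OF assms])
  also have "\<dots> = 4 * (?d * rres n l t j)^2 * (s - t)^2 * rres n l s j"
    by (simp add: power2_eq_square algebra_simps)
  finally show ?thesis .
qed

lemma rres_remainder_bound:
  assumes "window l s" "window l t"
  shows "\<bar>rres n l s j - rres n l t j - (s - t) * rres_deriv n l t j\<bar> \<le> 512 * decay n j * (s - t)^2"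
proof -
  have a: "(real_of_int (j - n) * rres n l t j)^2 \<le> 16"
  proof -
    have "(real_of_int (j - n) * rres n l t j)^2 = \<bar>real_of_int (j - n) * rres n l t j\<bar>^2" by simp
    also have "\<dots> \<le> 4^2" by (rule power_mono[OF rres_mult_dist_bound[OF assms(2)]]) simp
    finally show ?thesis by simp
  qed
  have "\<bar>rres n l s j - rres n l t j - (s - t) * rres_deriv n l t j\<bar>
      = 4 * (real_of_int (j - n) * rres n l t j)^2 * (s - t)^2 * \<bar>rres n l s j\<bar>"
    unfolding rres_remainder[OF assms] by (simp add: abs_mult)
  also have "\<dots> \<le> 4 * 16 * (s - t)^2 * (8 * decay n j)"
    by (intro mult_mono rres_le_decay[OF assms(1)] a) auto
  finally show ?thesis by (simp add: mult_ac)
qed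

lemma rres_diff_bound:
  assumes "window l s" "window l t"
  shows "\<bar>rres n l s j - rres n l t j\<bar> \<le> 64 * decay n j * \<bar>s - t\<bar>"
proof -
  have "rres n l s j - rres n l t j = (- 2) * (real_of_int (j - n) * rres n l t j) * (s - t) * rres n l s j"
    unfolding rres_diff[OF assms] by (simp only: mult_ac)
  then have "\<bar>rres n l s j - rres n l t j\<bar>
      = 2 * \<bar>real_of_int (j - n) * rres n l t j\<bar> * \<bar>s - t\<bar> * \<bar>rres n l s j\<bar>"
    by (simp only: abs_mult abs_neg_numeral abs_numeral)
  also have "\<dots> \<le> 2 * 4 * \<bar>s - t\<bar> * (8 * decay n j)"
    by (intro mult_mono rres_mult_dist_bound[OF assms(2)] rres_le_decay[OF assms(1)]) auto
  finally show ?thesis by (simp add: mult_ac)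
qed

lemma rres_deriv_bound:
  assumes "window l t"
  shows "\<bar>rres_deriv n l t j\<bar> \<le> 64 * decay n j"
proof -
  have "rres_deriv n l t j = (- 2) * (real_of_int (j - n) * rres n l t j) * rres n l t j"
    unfolding rres_deriv_def by (simp only: power2_eq_square mult.assoc)
  then have "\<bar>rres_deriv n l t j\<bar> = 2 * \<bar>real_of_int (j - n) * rres n l t j\<bar> * \<bar>rres n l t j\<bar>"
    by (simp only: abs_mult abs_neg_numeral abs_numeral)
  also have "\<dots> \<le> 2 * 4 * (8 * decay n j)"
    by (intro mult_mono rres_mult_dist_bound[OF assms] rres_le_decay[OF assms]) auto
  finally show ?thesis by simp
qed

lemma Rhat_H0:
  assumes "window l t"
  shows "(\<lambda>k. Rhat n l t (H0 t x) k - complex_of_real (E n t) * Rhat n l t x k) = PPperp n l x"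
proof
  fix k
  have "Rhat n l t (H0 t x) k - complex_of_real (E n t) * Rhat n l t x k
      = complex_of_real (rres n l t k * (E k t - E n t)) * x k"
    unfolding Rhat_eq_rres H0_def by (simp add: algebra_simps)
  then show "Rhat n l t (H0 t x) k - complex_of_real (E n t) * Rhat n l t x k = PPperp n l x k"
    unfolding rres_mult_E_diff[OF assms] PPperp_def by simp
qed

lemma ell2_rres:
  assumes "window l t" shows "ell2 (\<lambda>j. complex_of_real (rres n l t j))"
  by (rule ell2_decay_dominated(1)[where C=8 and n=n]) (simp add: rres_le_decay[OF assms])

lemma Rhat_abs_summable: "window l t \<Longrightarrow> ell2 x \<Longrightarrow> (\<lambda>j. cmod (Rhat n l t x j)) summable_on UNIV"
  unfolding Rhat_eq_rres by (rule ell2_mult_abs_summable[OF ell2_rres])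

lemma ell2_Rhat:
  assumes "window l t" "ell2 x" shows "ell2 (Rhat n l t x)"
proof (rule ell2_dominated(1)[OF assms(2), where C=8])
  fix k
  have "\<bar>rres n l t k\<bar> \<le> 8"
    using rres_le_decay[OF assms(1), of n k] decay_le_1[of n k] by linarith
  then show "cmod (Rhat n l t x k) \<le> 8 * cmod (x k)"
    unfolding Rhat_eq_rres norm_mult norm_of_real by (rule mult_right_mono) simp
qed

section \<open>Kernels of T1 and T2\<close>

definition conv_kernel :: "(real \<Rightarrow> real) \<Rightarrow> int \<Rightarrow> complex" where
  "conv_kernel V k = complex_of_real (1 / sqrt (2 * pi)) * Vhat V k"

definition T1_kernel :: "(real \<Rightarrow> real) \<Rightarrow> int \<Rightarrow> int \<Rightarrow> real \<Rightarrow> int \<Rightarrow> complex" where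
  "T1_kernel V n l t j = conv_kernel V (n - j) * complex_of_real (rres n l t j)"

definition T1_kernel_deriv :: "(real \<Rightarrow> real) \<Rightarrow> int \<Rightarrow> int \<Rightarrow> real \<Rightarrow> int \<Rightarrow> complex" where
  "T1_kernel_deriv V n l t j = conv_kernel V (n - j) * complex_of_real (rres_deriv n l t j)"

definition T1V_kernel :: "(real \<Rightarrow> real) \<Rightarrow> int \<Rightarrow> int \<Rightarrow> real \<Rightarrow> int \<Rightarrow> complex" where
  "T1V_kernel V n l t j = (\<Sum>\<^sub>\<infinity>k. T1_kernel V n l t k * conv_kernel V (k - j))"

definition T1V_kernel_deriv :: "(real \<Rightarrow> real) \<Rightarrow> int \<Rightarrow> int \<Rightarrow> real \<Rightarrow> int \<Rightarrow> complex" where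
  "T1V_kernel_deriv V n l t j = (\<Sum>\<^sub>\<infinity>k. T1_kernel_deriv V n l t k * conv_kernel V (k - j))"

definition T2_kernel :: "(real \<Rightarrow> real) \<Rightarrow> int \<Rightarrow> int \<Rightarrow> real \<Rightarrow> int \<Rightarrow> complex" where
  "T2_kernel V n l t j = complex_of_real (rres n l t j) * T1V_kernel V n l t j"

definition T2_kernel_deriv :: "(real \<Rightarrow> real) \<Rightarrow> int \<Rightarrow> int \<Rightarrow> real \<Rightarrow> int \<Rightarrow> complex" where
  "T2_kernel_deriv V n l t j = complex_of_real (rres_deriv n l t j) * T1V_kernel V n l t j
     + complex_of_real (rres n l t j) * T1V_kernel_deriv V n l t j"

abbreviation conv_norm :: "(real \<Rightarrow> real) \<Rightarrow> real" where
  "conv_norm V \<equiv> l2norm (conv_kernel V)"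

lemma Vop_eq_conv_kernel: "Vop V x m = (\<Sum>\<^sub>\<infinity>j. conv_kernel V (m - j) * x j)"
  unfolding Vop_def conv_kernel_def mult.assoc by (rule infsum_cmult_right'[symmetric])

lemma T1_apply: "T1 V n l t x n = (\<Sum>\<^sub>\<infinity>j. T1_kernel V n l t j * x j)"
  unfolding T1_def Pm_def Vop_eq_conv_kernel T1_kernel_def Rhat_eq_rres by (simp add: mult.assoc)

lemma norm_product_remainder_le:
  fixes r0 r1 r' g0 g1 g' h :: complex
  assumes "cmod (r1 - r0 - h * r') \<le> A" "cmod g0 \<le> G" "cmod r0 \<le> R" "cmod (g1 - g0 - h * g') \<le> B"
    and "cmod (r1 - r0) \<le> C" "cmod (g1 - g0) \<le> D"
  shows "cmod (r1 * g1 - r0 * g0 - h * (r' * g0 + r0 * g')) \<le> A * G + R * B + C * D"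
proof -
  have "r1 * g1 - r0 * g0 - h * (r' * g0 + r0 * g')
    = (r1 - r0 - h * r') * g0 + r0 * (g1 - g0 - h * g') + (r1 - r0) * (g1 - g0)"
    by (simp add: algebra_simps)
  also have "cmod \<dots> \<le> cmod ((r1 - r0 - h * r') * g0) + cmod (r0 * (g1 - g0 - h * g')) + cmod ((r1 - r0) * (g1 - g0))"
    by (rule order_trans[OF norm_triangle_ineq add_right_mono[OF norm_triangle_ineq]])
  also have "\<dots> \<le> A * G + R * B + C * D"
    unfolding norm_mult using assms by (intro add_mono mult_mono) (auto intro: order_trans[OF norm_ge_zero])
  finally show ?thesis .
qed

context
  fixes V :: "real \<Rightarrow> real"
  assumes V: "norm0_finite V"
begin

lemma ell2_conv_kernel: "ell2 (conv_kernel V)"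
proof -
  have "ell2 (Vhat V)" using V unfolding norm0_finite_def ell2_def .
  then show ?thesis unfolding conv_kernel_def[abs_def] by (rule ell2_scale)
qed

lemma ell2_conv_kernel_shift: "ell2 (\<lambda>k. conv_kernel V (k - j))" "ell2 (\<lambda>k. conv_kernel V (j - k))"
  using ell2_reindex(1)[OF bij_int_shifts(2), of "conv_kernel V" j]
    ell2_reindex(1)[OF bij_int_shifts(1), of "conv_kernel V" j] ell2_conv_kernel
  by simp_all

lemma l2norm_conv_kernel_shift: "l2norm (\<lambda>k. conv_kernel V (k - j)) = conv_norm V"
  by (rule ell2_reindex(2)[OF bij_int_shifts(2)])

lemma norm_conv_kernel_mult_le: "cmod (conv_kernel V k * complex_of_real r) \<le> conv_norm V * \<bar>r\<bar>"
  unfolding norm_mult norm_of_real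
  by (intro mult_right_mono norm_le_l2norm ell2_conv_kernel abs_ge_zero)

lemma T1_kernel_bound: "window l t \<Longrightarrow> cmod (T1_kernel V n l t j) \<le> (8 * conv_norm V) * decay n j"
  unfolding T1_kernel_def
  using order_trans[OF norm_conv_kernel_mult_le mult_left_mono[OF rres_le_decay l2norm_nonneg]]
  by (simp add: mult_ac)

lemma T1_kernel_deriv_bound: "window l t \<Longrightarrow> cmod (T1_kernel_deriv V n l t j) \<le> (64 * conv_norm V) * decay n j"
  unfolding T1_kernel_deriv_def
  using order_trans[OF norm_conv_kernel_mult_le mult_left_mono[OF rres_deriv_bound l2norm_nonneg]]
  by (simp add: mult_ac)

lemma T1_kernel_diff_bound:
  assumes "window l s" "window l t"
  shows "cmod (T1_kernel V n l s j - T1_kernel V n l t j) \<le> (64 * conv_norm V * \<bar>s - t\<bar>) * decay n j"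
proof -
  have "cmod (conv_kernel V (n - j) * complex_of_real (rres n l s j - rres n l t j))
      \<le> conv_norm V * (64 * decay n j * \<bar>s - t\<bar>)"
    by (intro order_trans[OF norm_conv_kernel_mult_le] mult_left_mono rres_diff_bound assms l2norm_nonneg)
  then show ?thesis
    unfolding T1_kernel_def by (simp add: right_diff_distrib mult_ac)
qed

lemma T1_kernel_remainder_bound:
  assumes "window l s" "window l t"
  shows "cmod (T1_kernel V n l s j - T1_kernel V n l t j - complex_of_real (s - t) * T1_kernel_deriv V n l t j)
       \<le> (512 * conv_norm V) * decay n j * (s - t)^2"
proof -
  have "cmod (conv_kernel V (n - j) * complex_of_real (rres n l s j - rres n l t j - (s - t) * rres_deriv n l t j))
      \<le> conv_norm V * (512 * decay n j * (s - t)^2)"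
    by (intro order_trans[OF norm_conv_kernel_mult_le] mult_left_mono rres_remainder_bound assms l2norm_nonneg)
  then show ?thesis
    unfolding T1_kernel_def T1_kernel_deriv_def by (simp add: right_diff_distrib mult_ac)
qed

lemma ell2_T1_kernel: "window l t \<Longrightarrow> ell2 (T1_kernel V n l t)"
  by (rule ell2_decay_dominated(1)[OF T1_kernel_bound])

lemma ell2_T1_kernel_deriv: "window l t \<Longrightarrow> ell2 (T1_kernel_deriv V n l t)"
  by (rule ell2_decay_dominated(1)[OF T1_kernel_deriv_bound])

lemma T1_kernel_abs_summable:
  assumes t: "window l t" shows "(\<lambda>k. cmod (T1_kernel V n l t k)) summable_on UNIV"
proof -
  have "ell2 (\<lambda>k. complex_of_real (8 * decay n k))"
    using ell2_scale[OF ell2_decay, of 8 n] by simp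
  from ell2_mult_abs_summable[OF ell2_conv_kernel_shift(2) this, of n]
  show ?thesis
  proof (rule summable_on_comparison_test)
    fix k
    show "cmod (T1_kernel V n l t k) \<le> cmod (conv_kernel V (n - k) * complex_of_real (8 * decay n k))"
      unfolding T1_kernel_def norm_mult norm_of_real
      using rres_le_decay[OF t, of n k] decay_pos[of n k] by (simp add: mult_left_mono)
  qed simp
qed

lemma norm_pairing_conv_kernel_le:
  assumes "\<And>k. cmod (a k) \<le> C * decay n k"
  shows "cmod (\<Sum>\<^sub>\<infinity>k. a k * conv_kernel V (k - j))
      \<le> \<bar>C\<bar> * decay_norm n * conv_norm V"
  using norm_infsum_mult_le[OF ell2_decay_dominated(1)[OF assms] ell2_conv_kernel_shift(1)]
    mult_right_mono[OF ell2_decay_dominated(2)[OF assms] l2norm_nonneg]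
  unfolding l2norm_conv_kernel_shift by (rule order_trans)

lemma T1V_kernel_bound:
  "window l t \<Longrightarrow> cmod (T1V_kernel V n l t j) \<le> 8 * conv_norm V * decay_norm n * conv_norm V"
  unfolding T1V_kernel_def
  using norm_pairing_conv_kernel_le[OF T1_kernel_bound] by (simp add: l2norm_nonneg)

lemma T1V_kernel_deriv_bound:
  "window l t \<Longrightarrow> cmod (T1V_kernel_deriv V n l t j) \<le> 64 * conv_norm V * decay_norm n * conv_norm V"
  unfolding T1V_kernel_deriv_def
  using norm_pairing_conv_kernel_le[OF T1_kernel_deriv_bound] by (simp add: l2norm_nonneg)

lemma T1V_kernel_remainder:
  assumes "window l s" "window l t"
  shows "T1V_kernel V n l s j - T1V_kernel V n l t j - h * T1V_kernel_deriv V n l t j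
    = (\<Sum>\<^sub>\<infinity>k. (T1_kernel V n l s k - T1_kernel V n l t k - h * T1_kernel_deriv V n l t k) * conv_kernel V (k - j))"
  unfolding T1V_kernel_def T1V_kernel_deriv_def
  using assms by (intro infsum_mult_remainder[symmetric] ell2_mult_summable ell2_T1_kernel
      ell2_T1_kernel_deriv ell2_conv_kernel_shift)

lemma T1V_kernel_diff_bound:
  assumes "window l s" "window l t"
  shows "cmod (T1V_kernel V n l s j - T1V_kernel V n l t j) \<le> 64 * conv_norm V * \<bar>s - t\<bar> * decay_norm n * conv_norm V"
  using T1V_kernel_remainder[OF assms, of n j 0]
    norm_pairing_conv_kernel_le[OF T1_kernel_diff_bound[OF assms]]
  by (simp add: l2norm_nonneg abs_mult)

lemma T1V_kernel_remainder_bound: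
  assumes "window l s" "window l t"
  shows "cmod (T1V_kernel V n l s j - T1V_kernel V n l t j - complex_of_real (s - t) * T1V_kernel_deriv V n l t j)
    \<le> 512 * conv_norm V * (s - t)^2 * decay_norm n * conv_norm V"
proof -
  have "cmod (T1_kernel V n l s k - T1_kernel V n l t k - complex_of_real (s - t) * T1_kernel_deriv V n l t k)
      \<le> (512 * conv_norm V * (s - t)^2) * decay n k" for k
    using T1_kernel_remainder_bound[OF assms] by (simp add: mult_ac)
  from norm_pairing_conv_kernel_le[OF this] show ?thesis
    unfolding T1V_kernel_remainder[OF assms] by (simp add: l2norm_nonneg abs_mult)
qed

lemma T2_kernel_bound:
  "window l t \<Longrightarrow> cmod (T2_kernel V n l t j) \<le> (64 * conv_norm V * decay_norm n * conv_norm V) * decay n j"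
  unfolding T2_kernel_def norm_mult norm_of_real
  using mult_mono[OF rres_le_decay T1V_kernel_bound] decay_pos[of n j] by (simp add: mult_ac)

lemma T2_kernel_deriv_bound:
  assumes t: "window l t"
  shows "cmod (T2_kernel_deriv V n l t j) \<le> (1024 * conv_norm V * decay_norm n * conv_norm V) * decay n j"
proof -
  have "cmod (T2_kernel_deriv V n l t j)
      \<le> \<bar>rres_deriv n l t j\<bar> * cmod (T1V_kernel V n l t j) + \<bar>rres n l t j\<bar> * cmod (T1V_kernel_deriv V n l t j)"
    unfolding T2_kernel_deriv_def by (rule order_trans[OF norm_triangle_ineq]) (simp add: norm_mult)
  also have "\<dots> \<le> (64 * decay n j) * (8 * conv_norm V * decay_norm n * conv_norm V) + (8 * decay n j) * (64 * conv_norm V * decay_norm n * conv_norm V)"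
    using decay_pos[of n j]
    by (intro add_mono mult_mono rres_deriv_bound rres_le_decay T1V_kernel_bound T1V_kernel_deriv_bound t) auto
  finally show ?thesis by (simp add: algebra_simps)
qed

lemma T2_kernel_remainder_bound:
  assumes s: "window l s" and t: "window l t"
  shows "cmod (T2_kernel V n l s j - T2_kernel V n l t j - complex_of_real (s - t) * T2_kernel_deriv V n l t j)
    \<le> (12288 * conv_norm V * decay_norm n * conv_norm V) * decay n j * (s - t)^2"
proof -
  let ?G = "conv_norm V * decay_norm n * conv_norm V"
  have "cmod (T2_kernel V n l s j - T2_kernel V n l t j - complex_of_real (s - t) * T2_kernel_deriv V n l t j)
      \<le> (512 * decay n j * (s - t)^2) * (8 * ?G) + (8 * decay n j) * (512 * (s - t)^2 * ?G)
        + (64 * decay n j * \<bar>s - t\<bar>) * (64 * \<bar>s - t\<bar> * ?G)"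
    unfolding T2_kernel_def T2_kernel_deriv_def
  proof (rule norm_product_remainder_le)
    show "cmod (complex_of_real (rres n l s j) - complex_of_real (rres n l t j)
        - complex_of_real (s - t) * complex_of_real (rres_deriv n l t j)) \<le> 512 * decay n j * (s - t)^2"
      using rres_remainder_bound[OF s t, of n j] by (simp flip: of_real_mult of_real_diff)
    show "cmod (complex_of_real (rres n l s j) - complex_of_real (rres n l t j)) \<le> 64 * decay n j * \<bar>s - t\<bar>"
      using rres_diff_bound[OF s t, of n j] by (simp flip: of_real_diff)
    show "cmod (complex_of_real (rres n l t j)) \<le> 8 * decay n j"
      using rres_le_decay[OF t, of n j] by simp
  qed (use T1V_kernel_bound[OF t, of n j] T1V_kernel_remainder_bound[OF s t, of n j]
        T1V_kernel_diff_bound[OF s t, of n j] in \<open>simp_all add: mult_ac\<close>)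
  also have "\<dots> = (512 * decay n j * (s - t)^2) * (8 * ?G) + (8 * decay n j) * (512 * (s - t)^2 * ?G)
        + 4096 * ?G * decay n j * (\<bar>s - t\<bar> * \<bar>s - t\<bar>)"
    by (simp add: mult_ac del: abs_mult_self_eq)
  also have "\<dots> = (12288 * ?G) * decay n j * (s - t)^2"
    unfolding abs_mult_self_eq by (simp add: power2_eq_square algebra_simps)
  finally show ?thesis by (simp add: mult_ac)
qed

lemma ell2_T2_kernel: "window l t \<Longrightarrow> ell2 (T2_kernel V n l t)"
  by (rule ell2_decay_dominated(1)[OF T2_kernel_bound])

lemma ell2_T2_kernel_deriv: "window l t \<Longrightarrow> ell2 (T2_kernel_deriv V n l t)"
  by (rule ell2_decay_dominated(1)[OF T2_kernel_deriv_bound])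

lemma ell2_Vop: "(\<lambda>j. cmod (x j)) summable_on UNIV \<Longrightarrow> ell2 (Vop V x)"
  unfolding Vop_eq_conv_kernel[abs_def] by (rule conv_ell2[OF ell2_conv_kernel])

lemma Vop_lincomb:
  "ell2 x \<Longrightarrow> ell2 y \<Longrightarrow> Vop V (\<lambda>k. c * x k + d * y k) m = c * Vop V x m + d * Vop V y m"
  unfolding Vop_eq_conv_kernel by (rule infsum_mult_lincomb[OF ell2_conv_kernel_shift(2)])

lemma T1_lincomb:
  "window l t \<Longrightarrow> ell2 x \<Longrightarrow> ell2 y \<Longrightarrow>
     T1 V n l t (\<lambda>k. c * x k + d * y k) n = c * T1 V n l t x n + d * T1 V n l t y n"
  unfolding T1_apply by (rule infsum_mult_lincomb[OF ell2_T1_kernel])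

lemma T2_apply:
  assumes t: "window l t" and x: "ell2 x"
  shows "T2 V n l t x n = (\<Sum>\<^sub>\<infinity>j. T2_kernel V n l t j * x j)"
proof -
  define y where "y = Rhat n l t x"
  have y: "(\<lambda>j. cmod (y j)) summable_on UNIV"
    unfolding y_def by (rule Rhat_abs_summable[OF t x])
  have "T2 V n l t x n = (\<Sum>\<^sub>\<infinity>k. T1_kernel V n l t k * Vop V y k)"
    unfolding y_def T1_apply[symmetric] by (simp add: T1_def T2_def Pm_def)
  also have "\<dots> = (\<Sum>\<^sub>\<infinity>k. \<Sum>\<^sub>\<infinity>j. T1_kernel V n l t k * conv_kernel V (k - j) * y j)"
    unfolding Vop_eq_conv_kernel mult.assoc infsum_cmult_right' ..
  also have "\<dots> = (\<Sum>\<^sub>\<infinity>j. \<Sum>\<^sub>\<infinity>k. T1_kernel V n l t k * conv_kernel V (k - j) * y j)"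
  proof (rule infsum_swap_dominated[OF T1_kernel_abs_summable[OF t] y])
    fix k j
    show "cmod (T1_kernel V n l t k * conv_kernel V (k - j) * y j)
        \<le> conv_norm V * cmod (T1_kernel V n l t k) * cmod (y j)"
      using mult_right_mono[OF norm_le_l2norm[OF ell2_conv_kernel],
          of "cmod (T1_kernel V n l t k) * cmod (y j)" "k - j"]
      by (simp add: norm_mult mult_ac)
  qed
  also have "\<dots> = (\<Sum>\<^sub>\<infinity>j. T1V_kernel V n l t j * y j)"
    unfolding T1V_kernel_def infsum_cmult_left' ..
  also have "\<dots> = (\<Sum>\<^sub>\<infinity>j. T2_kernel V n l t j * x j)"
    unfolding y_def Rhat_eq_rres T2_kernel_def by (simp add: mult_ac)
  finally show ?thesis .
qed

lemma T2_lincomb: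
  "window l t \<Longrightarrow> ell2 x \<Longrightarrow> ell2 y \<Longrightarrow>
     T2 V n l t (\<lambda>k. c * x k + d * y k) n = c * T2 V n l t x n + d * T2 V n l t y n"
  by (simp add: T2_apply ell2_add ell2_scale infsum_mult_lincomb[OF ell2_T2_kernel])

lemma T1_kernel_has_l2_deriv:
  assumes t: "window l t"
  shows "l2_has_deriv (\<lambda>s. T1_kernel V n l s) (T1_kernel_deriv V n l t) t"
  by (rule l2_has_deriv_quadratic_remainder[where K="512 * conv_norm V" and n=n],
      rule eventually_mono[OF window_eventually[OF t]])
    (use T1_kernel_remainder_bound[OF _ t] in auto)

lemma T2_kernel_has_l2_deriv:
  assumes t: "window l t"
  shows "l2_has_deriv (\<lambda>s. T2_kernel V n l s) (T2_kernel_deriv V n l t) t"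
  by (rule l2_has_deriv_quadratic_remainder[where K="12288 * conv_norm V * decay_norm n * conv_norm V" and n=n],
      rule eventually_mono[OF window_eventually[OF t]])
    (use T2_kernel_remainder_bound[OF _ t] in auto)

lemma has_vector_derivative_T1_kernel:
  assumes t: "window l t"
    and \<phi>: "l2_has_deriv \<phi> D t" "\<And>s. ell2 (\<phi> s)" "\<And>s. l2norm (\<phi> s) \<le> B" and D: "ell2 D"
  shows "((\<lambda>s. T1 V n l s (\<phi> s) n) has_vector_derivative
           (\<Sum>\<^sub>\<infinity>j. T1_kernel_deriv V n l t j * \<phi> t j) + T1 V n l t D n) (at t)"
  unfolding T1_apply
  by (rule has_vector_derivative_pairing[OF T1_kernel_has_l2_deriv[OF t]
        eventually_mono[OF window_eventually[OF t] ell2_T1_kernel]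
        ell2_T1_kernel[OF t] ell2_T1_kernel_deriv[OF t] \<phi> D])

lemma has_vector_derivative_T2_kernel:
  assumes t: "window l t"
    and \<phi>: "l2_has_deriv \<phi> D t" "\<And>s. ell2 (\<phi> s)" "\<And>s. l2norm (\<phi> s) \<le> B" and D: "ell2 D"
  shows "((\<lambda>s. T2 V n l s (\<phi> s) n) has_vector_derivative
           (\<Sum>\<^sub>\<infinity>j. T2_kernel_deriv V n l t j * \<phi> t j) + T2 V n l t D n) (at t)"
proof -
  have "((\<lambda>s. \<Sum>\<^sub>\<infinity>j. T2_kernel V n l s j * \<phi> s j) has_vector_derivative
           (\<Sum>\<^sub>\<infinity>j. T2_kernel_deriv V n l t j * \<phi> t j) + (\<Sum>\<^sub>\<infinity>j. T2_kernel V n l t j * D j)) (at t)"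
    by (rule has_vector_derivative_pairing[OF T2_kernel_has_l2_deriv[OF t]
        eventually_mono[OF window_eventually[OF t] ell2_T2_kernel]
        ell2_T2_kernel[OF t] ell2_T2_kernel_deriv[OF t] \<phi> D])
  then show ?thesis
    unfolding T2_apply[OF t D, symmetric]
    by (rule has_vector_derivative_transform_within_open[OF _ window_open])
      (use t T2_apply \<phi>(2) in auto)
qed

lemma dT_T1_apply:
  assumes "window l t" "ell2 x"
  shows "dT (T1 V n l) t x n = (\<Sum>\<^sub>\<infinity>j. T1_kernel_deriv V n l t j * x j)"
  using has_vector_derivative_T1_kernel[OF assms(1) l2_has_deriv_const assms(2) order_refl ell2_zero]
  by (simp add: dT_def vector_derivative_at T1_apply)

lemma dT_T2_apply:
  assumes "window l t" "ell2 x"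
  shows "dT (T2 V n l) t x n = (\<Sum>\<^sub>\<infinity>j. T2_kernel_deriv V n l t j * x j)"
  using has_vector_derivative_T2_kernel[OF assms(1) l2_has_deriv_const assms(2) order_refl ell2_zero]
  by (simp add: dT_def vector_derivative_at T2_apply[OF assms(1) ell2_zero])

lemma Vop_PPperp:
  assumes t: "window l t" and x: "ell2 x" and Hx: "ell2 (H0 t x)"
  shows "Vop V (PPperp n l x) = (\<lambda>m. Vop V (Rhat n l t (H0 t x)) m - complex_of_real (E n t) * Vop V (Rhat n l t x) m)"
  using Vop_lincomb[OF ell2_Rhat[OF t Hx] ell2_Rhat[OF t x], where c=1 and d="- complex_of_real (E n t)"]
  unfolding Rhat_H0[OF t, symmetric] by (simp add: fun_eq_iff)

lemma T1_H0:
  assumes "window l t" "ell2 x" "ell2 (H0 t x)"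
  shows "T1 V n l t (H0 t x) n = complex_of_real (E n t) * T1 V n l t x n + Vop V (PPperp n l x) n"
  unfolding Vop_PPperp[OF assms] by (simp add: T1_def Pm_def)

lemma T2_H0:
  assumes t: "window l t" and x: "ell2 x" and Hx: "ell2 (H0 t x)"
  shows "T2 V n l t (H0 t x) n = complex_of_real (E n t) * T2 V n l t x n + T1 V n l t (Vop V (PPperp n l x)) n"
  using T1_lincomb[OF t ell2_Vop[OF Rhat_abs_summable[OF t Hx]] ell2_Vop[OF Rhat_abs_summable[OF t x]],
      where n=n and c=1 and d="- complex_of_real (E n t)"]
  unfolding Vop_PPperp[OF assms] T2_def T1_def[symmetric] by simp

lemma Vop_PP_split:
  assumes "ell2 x"
  shows "Vop V x = (\<lambda>m. Vop V (PP n l x) m + Vop V (PPperp n l x) m)"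
proof -
  have "ell2 (PP n l x)" "ell2 (PPperp n l x)"
    using assms by (auto elim!: ell2_dominated(1)[where C=1] simp: PP_def PPperp_def)
  have "x = (\<lambda>k. 1 * PP n l x k + 1 * PPperp n l x k)"
    by (simp add: PP_def PPperp_def fun_eq_iff)
  with Vop_lincomb[OF \<open>ell2 (PP n l x)\<close> \<open>ell2 (PPperp n l x)\<close>, where c=1 and d=1] show ?thesis
    by (metis mult_1)
qed

lemma ell2_Hop: "H2 x \<Longrightarrow> ell2 (\<lambda>k. - \<i> * Hop V t x k)"
  unfolding Hop_def
  by (intro ell2_scale ell2_add H2_H0_ell2 ell2_Vop H2_abs_summable)

lemma T1_generator:
  assumes t: "window l t" and x: "H2 x"
  shows "T1 V n l t (\<lambda>k. - \<i> * Hop V t x k) n = - \<i> * (complex_of_real (E n t) * T1 V n l t x n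
    + Vop V (PPperp n l x) n + T1 V n l t (Vop V (PP n l x)) n + T1 V n l t (Vop V (PPperp n l x)) n)"
proof -
  have x2: "ell2 x" and Hx: "ell2 (H0 t x)" and x1: "(\<lambda>j. cmod (x j)) summable_on UNIV"
    using x by (rule H2_ell2 H2_H0_ell2 H2_abs_summable)+
  have "ell2 (Vop V (PP n l x))" "ell2 (Vop V (PPperp n l x))"
    using x1 by (auto intro!: ell2_Vop elim!: summable_on_comparison_test simp: PP_def PPperp_def)
  from T1_lincomb[OF t this, where n=n and c=1 and d=1]
  have "T1 V n l t (Vop V x) n = T1 V n l t (Vop V (PP n l x)) n + T1 V n l t (Vop V (PPperp n l x)) n"
    unfolding Vop_PP_split[OF x2, of n l] by simp
  moreover have "(\<lambda>k. - \<i> * Hop V t x k) = (\<lambda>k. (- \<i>) * H0 t x k + (- \<i>) * Vop V x k)"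
    unfolding Hop_def by (simp add: fun_eq_iff algebra_simps)
  ultimately show ?thesis
    using T1_lincomb[OF t Hx ell2_Vop[OF x1], where n=n and c="- \<i>" and d="- \<i>"]
    by (simp add: T1_H0[OF t x2 Hx] algebra_simps)
qed

lemma T2_generator:
  assumes t: "window l t" and x: "H2 x"
  shows "T2 V n l t (\<lambda>k. - \<i> * Hop V t x k) n = - \<i> * (complex_of_real (E n t) * T2 V n l t x n
    + T1 V n l t (Vop V (PPperp n l x)) n + T2 V n l t (Vop V x) n)"
proof -
  have x2: "ell2 x" and Hx: "ell2 (H0 t x)" and x1: "(\<lambda>j. cmod (x j)) summable_on UNIV"
    using x by (rule H2_ell2 H2_H0_ell2 H2_abs_summable)+
  have "(\<lambda>k. - \<i> * Hop V t x k) = (\<lambda>k. (- \<i>) * H0 t x k + (- \<i>) * Vop V x k)"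
    unfolding Hop_def by (simp add: fun_eq_iff algebra_simps)
  then show ?thesis
    using T2_lincomb[OF t Hx ell2_Vop[OF x1], where n=n and c="- \<i>" and d="- \<i>"]
    by (simp add: T2_H0[OF t x2 Hx] algebra_simps)
qed

end

section \<open>The propagated state\<close>

lemma U0_U0adj: "U0 t (U0adj t x) = x"
  unfolding U0_def U0adj_def by (simp add: mult.assoc[symmetric] exp_minus_inverse flip: exp_add)

lemma U0_Omega: "U0 t (Omega U t \<psi>) = U t \<psi>"
  unfolding Omega_def by (rule U0_U0adj)

lemma has_vector_derivative_phase:
  "((\<lambda>s. exp (\<i> * complex_of_real (phase0 n s))) has_vector_derivative
     \<i> * complex_of_real (E n t) * exp (\<i> * complex_of_real (phase0 n t))) (at t)"
proof -
  have "(phase0 n has_real_derivative E n t) (at t)"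
    unfolding phase0_def[abs_def] E_def by (auto intro!: derivative_eq_intros simp: power2_eq_square)
  then have "((\<lambda>s. \<i> * complex_of_real (phase0 n s)) has_vector_derivative \<i> * complex_of_real (E n t)) (at t)"
    by (intro has_vector_derivative_mult_right has_vector_derivative_of_real)
  from field_vector_diff_chain_at[OF this DERIV_exp] show ?thesis
    by (simp add: o_def)
qed

context
  fixes V :: "real \<Rightarrow> real" and U :: "real \<Rightarrow> state \<Rightarrow> state" and \<psi> :: state
  assumes V: "norm0_finite V" and U: "is_propagator V U" and \<psi>: "H2 \<psi>"
begin

lemma propagator_ell2: "ell2 (U s \<psi>)" and propagator_l2norm: "l2norm (U s \<psi>) = l2norm \<psi>"
  using U H2_ell2[OF \<psi>] unfolding is_propagator_def by auto

lemma propagator_H2: "H2 (U s \<psi>)"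
  and propagator_l2_has_deriv: "l2_has_deriv (\<lambda>s. U s \<psi>) (\<lambda>k. - \<i> * Hop V t (U t \<psi>) k) t"
  using U \<psi> unfolding is_propagator_def by auto

lemma has_vector_derivative_T1_propagator:
  "window l t \<Longrightarrow> ((\<lambda>s. T1 V n l s (U s \<psi>) n) has_vector_derivative
     dT (T1 V n l) t (U t \<psi>) n + T1 V n l t (\<lambda>k. - \<i> * Hop V t (U t \<psi>) k) n) (at t)"
  using has_vector_derivative_T1_kernel[OF V _ propagator_l2_has_deriv propagator_ell2 order_eq_refl[OF propagator_l2norm] ell2_Hop[OF V propagator_H2]]
  by (simp add: dT_T1_apply[OF V _ propagator_ell2])

lemma has_vector_derivative_T2_propagator:
  "window l t \<Longrightarrow> ((\<lambda>s. T2 V n l s (U s \<psi>) n) has_vector_derivative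
     dT (T2 V n l) t (U t \<psi>) n + T2 V n l t (\<lambda>k. - \<i> * Hop V t (U t \<psi>) k) n) (at t)"
  using has_vector_derivative_T2_kernel[OF V _ propagator_l2_has_deriv propagator_ell2 order_eq_refl[OF propagator_l2norm] ell2_Hop[OF V propagator_H2]]
  by (simp add: dT_T2_apply[OF V _ propagator_ell2])

lemma has_vector_derivative_bdry:
  assumes t: "window l t"
  shows "((\<lambda>s. bdry V U n l \<psi> s n) has_vector_derivative
           lhs_integrand V U n l \<psi> t n - rhs_integrand V U n l \<psi> t n) (at t)"
proof -
  define \<phi> where "\<phi> = U t \<psi>"
  define e where "e = exp (\<i> * complex_of_real (phase0 n t))"
  define Ec where "Ec = complex_of_real (E n t)"
  define A0 B0 where "A0 = T1 V n l t \<phi> n" and "B0 = T2 V n l t \<phi> n"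
  define dA dB where "dA = dT (T1 V n l) t \<phi> n" and "dB = dT (T2 V n l) t \<phi> n"
  define L where "L = Vop V (PPperp n l \<phi>) n"
  define P Q where "P = T1 V n l t (Vop V (PP n l \<phi>)) n" and "Q = T1 V n l t (Vop V (PPperp n l \<phi>)) n"
  define X where "X = T2 V n l t (Vop V \<phi>) n"
  have bdry: "bdry V U n l \<psi> s n = \<i> * (exp (\<i> * complex_of_real (phase0 n s))
      * (T1 V n l s (U s \<psi>) n - T2 V n l s (U s \<psi>) n))" for s
    unfolding bdry_def Let_def U0_Omega U0adj_def ..
  have deriv: "((\<lambda>s. bdry V U n l \<psi> s n) has_vector_derivative
      \<i> * (e * ((dA + T1 V n l t (\<lambda>k. - \<i> * Hop V t \<phi> k) n) - (dB + T2 V n l t (\<lambda>k. - \<i> * Hop V t \<phi> k) n))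
         + \<i> * Ec * e * (A0 - B0))) (at t)"
    unfolding bdry e_def Ec_def A0_def B0_def dA_def dB_def \<phi>_def
    by (intro has_vector_derivative_mult_right has_vector_derivative_mult has_vector_derivative_diff
        has_vector_derivative_phase has_vector_derivative_T1_propagator[OF t]
        has_vector_derivative_T2_propagator[OF t])
  have lhs: "lhs_integrand V U n l \<psi> t n = e * L"
    unfolding lhs_integrand_def U0_Omega U0adj_def e_def L_def \<phi>_def by (simp add: Pm_def)
  have rhs: "rhs_integrand V U n l \<psi> t n = e * (X + \<i> * dB - P - \<i> * dA)"
    unfolding rhs_integrand_def Let_def U0_Omega U0adj_def e_def X_def dB_def P_def dA_def \<phi>_def
    by (simp add: T1_def)
  have gen: "T1 V n l t (\<lambda>k. - \<i> * Hop V t \<phi> k) n = - \<i> * (Ec * A0 + L + P + Q)"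
    "T2 V n l t (\<lambda>k. - \<i> * Hop V t \<phi> k) n = - \<i> * (Ec * B0 + Q + X)"
    unfolding Ec_def A0_def B0_def L_def P_def Q_def X_def \<phi>_def
    by (rule T1_generator[OF V t propagator_H2] T2_generator[OF V t propagator_H2])+
  have "lhs_integrand V U n l \<psi> t n - rhs_integrand V U n l \<psi> t n
      = \<i> * (e * ((dA + T1 V n l t (\<lambda>k. - \<i> * Hop V t \<phi> k) n) - (dB + T2 V n l t (\<lambda>k. - \<i> * Hop V t \<phi> k) n))
         + \<i> * Ec * e * (A0 - B0))"
    unfolding lhs rhs gen by (simp add: algebra_simps)
  with deriv show ?thesis by simp
qed

lemma isCont_lhs_integrand: "isCont (\<lambda>s. lhs_integrand V U n l \<psi> s n) t"
proof -
  define w where "w j = conv_kernel V (n - j) * (if j = n \<or> j = - n - l then 0 else 1)" for j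
  have eq: "lhs_integrand V U n l \<psi> s n = exp (\<i> * complex_of_real (phase0 n s)) * (\<Sum>\<^sub>\<infinity>j. w j * U s \<psi> j)" for s
  proof -
    have "(\<lambda>j. conv_kernel V (n - j) * PPperp n l (U s \<psi>) j) = (\<lambda>j. w j * U s \<psi> j)"
      by (simp add: fun_eq_iff w_def PPperp_def)
    then show ?thesis
      by (simp add: lhs_integrand_def U0_Omega U0adj_def Pm_def Vop_eq_conv_kernel)
  qed
  have w: "ell2 w"
    by (rule ell2_dominated(1)[OF ell2_conv_kernel_shift(2)[OF V, of n], where C=1]) (simp add: w_def norm_mult)
  have "((\<lambda>s. \<Sum>\<^sub>\<infinity>j. w j * U s \<psi> j) has_vector_derivative
      (\<Sum>\<^sub>\<infinity>j. 0 * U t \<psi> j) + (\<Sum>\<^sub>\<infinity>j. w j * (- \<i> * Hop V t (U t \<psi>) j))) (at t)"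
    by (rule has_vector_derivative_pairing[OF l2_has_deriv_const _ w ell2_zero propagator_l2_has_deriv
          propagator_ell2 order_eq_refl[OF propagator_l2norm] ell2_Hop[OF V propagator_H2]])
      (simp add: w)
  then have "isCont (\<lambda>s. \<Sum>\<^sub>\<infinity>j. w j * U s \<psi> j) t"
    by (rule has_vector_derivative_continuous)
  then show ?thesis
    unfolding eq by (intro isCont_mult has_vector_derivative_continuous[OF has_vector_derivative_phase])
qed

lemma integral_identity_diagonal:
  assumes "s1 \<le> s2" and window: "\<And>t. t \<in> {s1..s2} \<Longrightarrow> window l t"
  shows "(\<lambda>t. lhs_integrand V U n l \<psi> t n) integrable_on {s1..s2}
    \<and> (\<lambda>t. rhs_integrand V U n l \<psi> t n) integrable_on {s1..s2}
    \<and> integral {s1..s2} (\<lambda>t. lhs_integrand V U n l \<psi> t n)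
      = integral {s1..s2} (\<lambda>t. rhs_integrand V U n l \<psi> t n)
        + (bdry V U n l \<psi> s2 n - bdry V U n l \<psi> s1 n)"
proof -
  let ?f = "\<lambda>t. lhs_integrand V U n l \<psi> t n" and ?g = "\<lambda>t. rhs_integrand V U n l \<psi> t n"
  let ?G = "\<lambda>t. bdry V U n l \<psi> t n"
  have f: "?f integrable_on {s1..s2}"
    by (intro integrable_continuous_interval continuous_at_imp_continuous_on ballI isCont_lhs_integrand)
  have "((\<lambda>t. ?f t - ?g t) has_integral ?G s2 - ?G s1) {s1..s2}"
    using assms(1) has_vector_derivative_at_within[OF has_vector_derivative_bdry[OF window]]
    by (rule fundamental_theorem_of_calculus)
  from has_integral_diff[OF integrable_integral[OF f] this]
  have "(?g has_integral integral {s1..s2} ?f - (?G s2 - ?G s1)) {s1..s2}"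
    by simp
  with f show ?thesis
    by (auto simp: has_integral_iff)
qed

end

lemma integrands_off_diagonal:
  assumes "m \<noteq> n"
  shows "lhs_integrand V U n l \<psi> t m = 0" and "rhs_integrand V U n l \<psi> t m = 0"
    and "bdry V U n l \<psi> t m = 0"
proof -
  have T: "T1 V n l s x m = 0" "T2 V n l s x m = 0" for s x
    using assms by (simp_all add: T1_def T2_def Pm_def)
  then have "dT (T1 V n l) t x m = 0" "dT (T2 V n l) t x m = 0" for x
    by (simp_all add: dT_def)
  with T assms show "lhs_integrand V U n l \<psi> t m = 0" "rhs_integrand V U n l \<psi> t m = 0"
    "bdry V U n l \<psi> t m = 0"
    by (simp_all add: lhs_integrand_def rhs_integrand_def bdry_def U0adj_def Pm_def Let_def)
qed

theorem lemma2:
  fixes V :: "real \<Rightarrow> real"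
    and U :: "real \<Rightarrow> (int \<Rightarrow> complex) \<Rightarrow> (int \<Rightarrow> complex)"
    and n l :: int and s1 s2 :: real and \<psi> :: "int \<Rightarrow> complex"
  assumes periodic: "\<forall>x. V (x + 2*pi) = V x"
    and integrable: "V absolutely_integrable_on {0..2*pi}"
    and norm0: "norm0_finite V"
    and nl: "2*n + l \<noteq> 0"
    and s12: "s1 < s2"
    and s1_ge: "real_of_int l / 2 - 1/4 \<le> s1"
    and s2_le: "s2 \<le> real_of_int l / 2 + 1/4"
    and propU: "is_propagator V U"
    and psi: "H2 \<psi>"
  shows "\<forall>m. (\<lambda>t. lhs_integrand V U n l \<psi> t m) integrable_on {s1..s2}
           \<and> (\<lambda>t. rhs_integrand V U n l \<psi> t m) integrable_on {s1..s2}
           \<and> integral {s1..s2} (\<lambda>t. lhs_integrand V U n l \<psi> t m)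
             = integral {s1..s2} (\<lambda>t. rhs_integrand V U n l \<psi> t m)
               + (bdry V U n l \<psi> s2 m - bdry V U n l \<psi> s1 m)"
proof (intro allI, goal_cases)
  case (1 m)
  have window: "window l t" if "t \<in> {s1..s2}" for t
    using that s1_ge s2_le unfolding window_def abs_less_iff by auto
  show ?case
  proof (cases "m = n")
    case True
    then show ?thesis
      using integral_identity_diagonal[OF norm0 propU psi less_imp_le[OF s12] window] by simp
  next
    case False
    then show ?thesis
      by (simp add: integrands_off_diagonal integrable_0)
  qed
qed

end
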